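(* Assume the setting described in the context, and let $K\in\mathbb{N}$ and $\omega\in\Omega$. For every $d\in\mathbb{N}$, $\varepsilon\in(0,1)$ let $f_\varepsilon\in C(\mathbb{R},\mathbb{R})$ and $\Phi_{f_\varepsilon},\Phi_{g^d_\varepsilon}\in\mathbf{N}$ satisfy $\mathcal{R}(\Phi_{f_\varepsilon})=f_\varepsilon$ and $\mathcal{R}(\Phi_{g^d_\varepsilon})=g^d_\varepsilon$. For every $d\in\mathbb{N}$, $\varepsilon\in(0,1)$ let $U^{d,\theta,K,\varepsilon}_{n,m}\colon[0,T]\times\mathbb{R}^d\times\Omega\to\mathbb{R}$, $\theta\in\Theta$, $n,m\in\mathbb{Z}$, satisfy for all $\theta\in\Theta$, $n\in\mathbb{N}_0$, $m\in\mathbb{N}$, $t\in[0,T]$, $x\in\mathbb{R}^d$ $$U^{d,\theta,K,\varepsilon}_{n,m}(t,x)=\frac{\mathbb{1}_{\mathbb{N}}(n)}{m^n}\sum_{i=1}^{m^n}g^d_\varepsilon\big(X^{d,(\theta,0,-i),K,\varepsilon,t,x}_T\big)+\sum_{\ell=0}^{n-1}\frac{T-t}{m^{n-\ell}}\sum_{i=1}^{m^{n-\ell}}\Big(f_\varepsilon\circ U^{d,(\theta,\ell,i),K,\varepsilon}_{\ell,m}-\mathbb{1}_{\mathbb{N}}(\ell)\,f_\varepsilon\circ U^{d,(\theta,-\ell,i),K,\varepsilon}_{\ell-1,m}\Big)\Big(\mathfrak{T}^{(\theta,\ell,i)}_t,X^{d,(\theta,\ell,i),K,\varepsilon,t,x}_{\mathfrak{T}^{(\theta,\ell,i)}_t}\Big).$$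 Let $(c_{d,\varepsilon})_{d\in\mathbb{N},\varepsilon\in(0,1)}\subseteq\mathbb{R}$ satisfy $c_{d,\varepsilon}\ge2d+|||\mathcal{D}(\Phi_{f_\varepsilon})|||+|||\mathcal{D}(\Phi_{g^d_\varepsilon})|||+|||\mathcal{D}(\Phi_{\beta^d_\varepsilon})|||+|||\mathcal{D}(\Phi_{\sigma^d_\varepsilon,0})|||+|||\mathcal{D}(\Phi_{F^d_\varepsilon,0})|||$. Then for all $m\in\mathbb{N}$, $n\in\mathbb{N}_0$, $d\in\mathbb{N}$, $\varepsilon\in(0,1)$ there exists $(\Phi^{d,\theta,K,\varepsilon}_{n,m,t})_{t\in[0,T],\theta\in\Theta}\subseteq\mathbf{N}$ such that: (i) $\mathcal{D}(\Phi^{d,\theta_1,K,\varepsilon}_{n,m,t_1})=\mathcal{D}(\Phi^{d,\theta_2,K,\varepsilon}_{n,m,t_2})$ for all $t_1,t_2\in[0,T]$, $\theta_1,\theta_2\in\Theta$; (ii) for all $t\in[0,T]$, $\theta\in\Theta$: $\dim(\mathcal{D}(\Phi^{d,\theta,K,\varepsilon}_{n,m,t}))=(n+1)\big[K\big(\max\{\dim(\mathcal{D}(\Phi_{\beta^d_\varepsilon})),\dim(\mathcal{D}(\Phi_{\sigma^d_\varepsilon,0})),\dim(\mathcal{D}(\Phi_{F^d_\varepsilon,0}))\}-1\big)+1\big]+n(\dim(\mathcal{D}(\Phi_{f_\varepsilon}))-2)+\dim(\mathcal{D}(\Phi_{g^d_\varepsilon}))-1$; (iii) for all $t\in[0,T]$,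 $\theta\in\Theta$: $|||\mathcal{D}(\Phi^{d,\theta,K,\varepsilon}_{n,m,t})|||\le c_{d,\varepsilon}(3m)^n$; (iv) for all $t\in[0,T]$, $\theta\in\Theta$, $x\in\mathbb{R}^d$: $U^{d,\theta,K,\varepsilon}_{n,m}(t,x,\omega)=(\mathcal{R}(\Phi^{d,\theta,K,\varepsilon}_{n,m,t}))(x)$.
   Context: Setting. $T\in(0,\infty)$, $c\in[2,\infty)$, $f\in C(\mathbb{R},\mathbb{R})$. For each $d\in\mathbb{N}$: $\beta^d\in C(\mathbb{R}^d,\mathbb{R}^d)$, $\sigma^d\in C(\mathbb{R}^d,\mathbb{R}^{d\times d})$, $\gamma^d\in C(\mathbb{R}^{2d},\mathbb{R}^d)$, $g^d\in C(\mathbb{R}^d,\mathbb{R})$, $\nu^d$ a Lévy measure on $\mathcal{B}(\mathbb{R}^d\setminus\{0\})$, satisfying: (A1) there is $C_d$ with $\|\gamma^d(x,z)\|^2\le C_d(1\wedge\|z\|^2)$, $\|\gamma^d(x,z)-\gamma^d(y,z)\|^2\le C_d\|x-y\|^2(1\wedge\|z\|^2)$; (A2) $D_x\gamma^d(x,z)$ exists and for some $\lambda_d>0$, $\lambda_d\le|\det(I_d+\delta D_x\gamma^d(x,z))|$ for all $x,z$, $\delta\in[0,1]$; (A3) $\|\beta^d(x)-\beta^d(y)\|^2+\|\sigma^d(x)-\sigma^d(y)\|_F^2+\int\|\gamma^d(x,z)-\gamma^d(y,z)\|^2\nu^d(dz)\le c\|x-y\|^2$, $|f(w_1)-f(w_2)|^2\le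 c|w_1-w_2|^2$, $|g^d(x)-g^d(y)|^2\le cd^cT^{-1}\|x-y\|^2$, $\|\beta^d(0)\|^2+\|\sigma^d(0)\|_F^2+\int\|\gamma^d(0,z)\|^2\nu^d(dz)+T^3(|f(0)|+1)^2+T|g^d(0)|^2\le cd^c$ (integrals over $\mathbb{R}^d\setminus\{0\}$). For $d\in\mathbb{N}$, $\varepsilon\in(0,1)$: $\beta^d_\varepsilon\in C(\mathbb{R}^d,\mathbb{R}^d)$, $\sigma^d_\varepsilon\in C(\mathbb{R}^d,\mathbb{R}^{d\times d})$, $\gamma^d_\varepsilon\in C(\mathbb{R}^{2d},\mathbb{R}^d)$, $g^d_\varepsilon\in C(\mathbb{R}^d,\mathbb{R})$ satisfying: (B1) the analogue of (A1) with a constant $C_{d,\varepsilon}$; (B2) $\|\beta^d_\varepsilon(x)-\beta^d_\varepsilon(y)\|^2+\|\sigma^d_\varepsilon(x)-\sigma^d_\varepsilon(y)\|_F^2+\int\|\gamma^d_\varepsilon(x,z)-\gamma^d_\varepsilon(y,z)\|^2\nu^d(dz)\le c\|x-y\|^2$, $|g^d_\varepsilon(x)-g^d_\varepsilon(y)|^2\le cd^cT^{-1}\|x-y\|^2$, $\|\beta^d_\varepsilon(0)\|^2+\|\sigma^d_\varepsilon(0)\|_F^2+\int\|\gamma^d_\varepsilon(0,z)\|^2\nu^d(dz)+T|g^d_\varepsilon(0)|^2\le cd^c$, and $\|\beta^d_\varepsilon(x)-\beta^d(x)\|^2+\|\sigma^d_\varepsilon(x)-\sigma^d(x)\|_F^2+\int\|\gamma^d_\varepsilon(x,z)-\gamma^d(x,z)\|^2\nu^d(dz)+|g^d_\varepsilon(x)-g^d(x)|^2\le\varepsilon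 cd^c(d^c+\|x\|^2)$ for all $x,y$. Moreover, for every $d,\varepsilon$, $F^d_\varepsilon\colon\mathbb{R}^d\to\mathbb{R}^{d\times d}$ and $G^d\colon\mathbb{R}^d\to\mathbb{R}^d$ are measurable with $\gamma^d_\varepsilon(y,z)=F^d_\varepsilon(y)G^d(z)$; for every $v\in\mathbb{R}^d$, $\Phi_{\beta^d_\varepsilon},\Phi_{\sigma^d_\varepsilon,v},\Phi_{F^d_\varepsilon,v}\in\mathbf{N}$ satisfy $\beta^d_\varepsilon=\mathcal{R}(\Phi_{\beta^d_\varepsilon})$, $\sigma^d_\varepsilon(\cdot)v=\mathcal{R}(\Phi_{\sigma^d_\varepsilon,v})$, $F^d_\varepsilon(\cdot)v=\mathcal{R}(\Phi_{F^d_\varepsilon,v})$, $\mathcal{D}(\Phi_{\sigma^d_\varepsilon,v})=\mathcal{D}(\Phi_{\sigma^d_\varepsilon,0})$, $\mathcal{D}(\Phi_{F^d_\varepsilon,v})=\mathcal{D}(\Phi_{F^d_\varepsilon,0})$. Probability. $(\Omega,\mathcal{F},\mathbb{P},(\mathbb{F}_t)_{t\in[0,T]})$ a filtered probability space with the usual conditions; $\Theta=\bigcup_{n\in\mathbb{N}}\mathbb{Z}^n$; $\mathfrak{t}^\theta$, $\theta\in\Theta$, i.i.d. uniform on $[0,1]$, $\mathfrak{T}^\theta_t=t+(T-t)\mathfrak{t}^\theta$; for each $d$, $W^{d,\theta}$ i.i.d. standard $d$-dim $(\mathbb{F}_t)$-Brownian motions, $N^{d,\theta}$ independent $(\mathbb{F}_t)$-Poisson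 random measures on $[0,\infty)\times(\mathbb{R}^d\setminus\{0\})$ with compensator $\nu^d(dz)dt$, $\tilde N^{d,\theta}=N^{d,\theta}-\nu^d(dz)dt$; $\mathcal{F}_0$, $(\mathfrak{t}^\theta)$, $(N^{d,\theta})$, $(W^{d,\theta})$ independent. $\lfloor t\rfloor_K=\max(\{0,\frac TK,\dots,T\}\cap((-\infty,t)\cup\{0\}))$ and $X^{d,\theta,K,\varepsilon,t,x}$ on $[t,T]$ satisfies $X_s=x+\int_t^s\beta^d_\varepsilon(X_{\max\{t,\lfloor u-\rfloor_K\}})du+\int_t^s\sigma^d_\varepsilon(X_{\max\{t,\lfloor u-\rfloor_K\}})dW^{d,\theta}_u+\int_t^s\int_{\mathbb{R}^d\setminus\{0\}}\gamma^d_\varepsilon(X_{\max\{t,\lfloor u-\rfloor_K\}},z)\tilde N^{d,\theta}(dz,du)$. Networks. $\mathbf{A}_k$ componentwise ReLU; $\mathbf{N}=\bigcup_{H\in\mathbb{N}}\bigcup_{(k_0,\dots,k_{H+1})\in\mathbb{N}^{H+2}}\prod_{j=1}^{H+1}(\mathbb{R}^{k_j\times k_{j-1}}\times\mathbb{R}^{k_j})$; for $\Phi=((W_1,B_1),\dots,(W_{H+1},B_{H+1}))$: $\mathcal{D}(\Phi)=(k_0,\dots,k_{H+1})$, $\mathcal{R}(\Phi)\in C(\mathbb{R}^{k_0},\mathbb{R}^{k_{H+1}})$, $(\mathcal{R}(\Phi))(x_0)=W_{H+1}x_H+B_{H+1}$ with $x_j=\mathbf{A}_{k_j}(W_jx_{j-1}+B_j)$.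 For a vector $x=(x_1,\dots,x_k)$: $\dim(x)=k$, $|||x|||=\max_i|x_i|$. $\|\cdot\|$ Euclidean, $\|\cdot\|_F$ Frobenius norm. *)

theory Defs
  imports "HOL-Analysis.Finite_Product_Measure" "Jordan_Normal_Form.Determinant"
begin

text \<open>Points of R^d are represented by vectors v :: real vec with dim_vec v = d,
  d x d matrices by m :: real mat with dim_row m = dim_col m = d.\<close>

definition vnorm2 :: "real vec \<Rightarrow> real" where
  "vnorm2 v = (\<Sum>i<dim_vec v. (v $ i)^2)"

definition vnorm :: "real vec \<Rightarrow> real" where
  "vnorm v = sqrt (vnorm2 v)"

definition frob2 :: "real mat \<Rightarrow> real" where
  "frob2 A = (\<Sum>i<dim_row A. \<Sum>j<dim_col A. (A $$ (i,j))^2)"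

definition vec_borel :: "nat \<Rightarrow> real vec measure" where
  "vec_borel d = vimage_algebra {v. dim_vec v = d} (\<lambda>v. restrict (\<lambda>i. v $ i) {..<d})
      (Pi\<^sub>M {..<d} (\<lambda>_. borel))"

definition levy_space :: "nat \<Rightarrow> real vec measure" where
  "levy_space d = restrict_space (vec_borel d) {z. dim_vec z = d \<and> z \<noteq> 0\<^sub>v d}"

definition levy_measure :: "nat \<Rightarrow> real vec measure \<Rightarrow> bool" where
  "levy_measure d \<nu> \<longleftrightarrow> sets \<nu> = sets (levy_space d) \<and>
     (\<integral>\<^sup>+ z. ennreal (min 1 (vnorm2 z)) \<partial>\<nu>) < \<infinity>"

definition vcont2 :: "nat \<Rightarrow> (real vec \<Rightarrow> real vec \<Rightarrow> real vec) \<Rightarrow> bool" where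
  "vcont2 d h \<longleftrightarrow> (\<forall>x z. dim_vec x = d \<longrightarrow> dim_vec z = d \<longrightarrow>
     (\<forall>e>0. \<exists>\<delta>>0. \<forall>x' z'. dim_vec x' = d \<longrightarrow> dim_vec z' = d \<longrightarrow>
        vnorm (x' - x) < \<delta> \<longrightarrow> vnorm (z' - z) < \<delta> \<longrightarrow> vnorm (h x' z' - h x z) < e))"

definition vec_has_jacobian :: "nat \<Rightarrow> (real vec \<Rightarrow> real vec) \<Rightarrow> real vec \<Rightarrow> real mat \<Rightarrow> bool" where
  "vec_has_jacobian d h x Jm \<longleftrightarrow> Jm \<in> carrier_mat d d \<and>
     (\<forall>e>0. \<exists>\<delta>>0. \<forall>k. dim_vec k = d \<longrightarrow> vnorm k < \<delta> \<longrightarrow>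
        vnorm (h (x + k) - h x - Jm *\<^sub>v k) \<le> e * vnorm k)"

type_synonym net = "(real mat \<times> real vec) list"

definition arch :: "net \<Rightarrow> nat list" where
  "arch \<Phi> = dim_col (fst (hd \<Phi>)) # map (\<lambda>(W,B). dim_vec B) \<Phi>"

definition is_net :: "net \<Rightarrow> bool" where
  "is_net \<Phi> \<longleftrightarrow> length \<Phi> \<ge> 2 \<and> (\<forall>k\<in>set (arch \<Phi>). k \<ge> 1) \<and>
     (\<forall>j<length \<Phi>. fst (\<Phi> ! j) \<in> carrier_mat (arch \<Phi> ! (j+1)) (arch \<Phi> ! j))"

definition relu :: "real vec \<Rightarrow> real vec" where
  "relu v = map_vec (\<lambda>y. max 0 y) v"

fun realize :: "net \<Rightarrow> real vec \<Rightarrow> real vec" where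
  "realize [] x = x"
| "realize [(W,B)] x = W *\<^sub>v x + B"
| "realize ((W,B) # l # L) x = realize (l # L) (relu (W *\<^sub>v x + B))"

definition maxnorm :: "nat list \<Rightarrow> nat" where
  "maxnorm xs = Max (set xs)"

definition flrK :: "real \<Rightarrow> nat \<Rightarrow> real \<Rightarrow> real" where
  "flrK T K t = Max ({0} \<union> {T * real j / real K | j. j \<le> K \<and> T * real j / real K < t})"

end

theory Submission
  imports Defs
begin

text \<open>Each Euler step \<open>y \<mapsto> y + h \<beta>(y) + \<sigma>(y) \<Delta>W + F(y) \<Delta>J\<close> is a sum of realizations of networks
  (\<open>\<sigma>(\<cdot>) v\<close> and \<open>F(\<cdot>) v\<close> are networks for every fixed \<open>v\<close>), hence itself a network, and composing
  the at most \<open>K\<close> steps between \<open>t\<close> and \<open>s\<close> realizes \<open>x \<mapsto> X^{t,x}_s\<close>. Identity networks pad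
  summands to a common depth, and summands of equal depth are realized in parallel, so widths add up.
  The recursion writes \<open>U_{n,m}\<close> as a linear combination of \<open>g \<circ> X\<close>, \<open>f \<circ> U_{l,m} \<circ> X\<close> and
  \<open>f \<circ> U_{l-1,m} \<circ> X\<close> with \<open>l < n\<close>; strong induction on \<open>n\<close> then gives a network of the
  depth stated in (ii) whose width is at most \<open>c (3m)^n\<close>. Padding all hidden layers
  with zero neurons up to that width makes the architecture independent of \<open>t\<close> and \<open>\<theta>\<close>.\<close>

text \<open>Unlike \<open>is_net\<close>, \<open>wf_net a \<Phi> b\<close> also admits a single affine layer.\<close>
fun wf_net :: "nat \<Rightarrow> net \<Rightarrow> nat \<Rightarrow> bool" where
  "wf_net a [] b = False"
| "wf_net a [(W,B)] b = (W \<in> carrier_mat b a \<and> dim_vec B = b \<and> 1 \<le> a \<and> 1 \<le> b)"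
| "wf_net a ((W,B)#l#L) b =
     (W \<in> carrier_mat (dim_vec B) a \<and> 1 \<le> a \<and> 1 \<le> dim_vec B \<and> wf_net (dim_vec B) (l#L) b)"

definition layer_dims :: "net \<Rightarrow> nat list" where
  "layer_dims \<Phi> = map (\<lambda>(W,B). dim_vec B) \<Phi>"

lemma layer_dims_simps [simp]:
  "layer_dims [] = []" "layer_dims ((W,B)#L) = dim_vec B # layer_dims L"
  by (auto simp: layer_dims_def)

lemma dim_relu [simp]: "dim_vec (relu v) = dim_vec v"
  by (simp add: relu_def)

lemma relu_append_vec: "relu (u @\<^sub>v v) = relu u @\<^sub>v relu v"
  by (rule eq_vecI) (auto simp: relu_def)

lemma dim_realize: "wf_net a \<Phi> b \<Longrightarrow> dim_vec x = a \<Longrightarrow> dim_vec (realize \<Phi> x) = b"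
  by (induction \<Phi> x arbitrary: a rule: realize.induct) auto

lemma arch_wf_net: "wf_net a \<Phi> b \<Longrightarrow> arch \<Phi> = a # layer_dims \<Phi>"
  by (induction a \<Phi> b rule: wf_net.induct) (auto simp: arch_def layer_dims_def)

lemma wf_net_dims_pos: "wf_net a \<Phi> b \<Longrightarrow> k \<in> set (a # layer_dims \<Phi>) \<Longrightarrow> 1 \<le> k"
  by (induction a \<Phi> b arbitrary: k rule: wf_net.induct) auto

lemma wf_net_in_out_pos: "wf_net a \<Phi> b \<Longrightarrow> 1 \<le> a \<and> 1 \<le> b"
  by (induction a \<Phi> b rule: wf_net.induct) auto

lemma wf_net_out_in_dims: "wf_net a \<Phi> b \<Longrightarrow> b \<in> set (a # layer_dims \<Phi>)"
  by (induction a \<Phi> b rule: wf_net.induct) auto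

lemma wf_net_layer_carrier:
  "wf_net a \<Phi> b \<Longrightarrow> j < length \<Phi> \<Longrightarrow>
   fst (\<Phi>!j) \<in> carrier_mat ((a # layer_dims \<Phi>) ! (j+1)) ((a # layer_dims \<Phi>) ! j)"
proof (induction a \<Phi> b arbitrary: j rule: wf_net.induct)
  case (3 a W B l L b)
  then show ?case by (cases j) auto
qed auto

lemma wf_net_is_net: "wf_net a \<Phi> b \<Longrightarrow> 2 \<le> length \<Phi> \<Longrightarrow> is_net \<Phi>"
  unfolding is_net_def
  using arch_wf_net[of a \<Phi> b] wf_net_dims_pos[of a \<Phi> b] wf_net_layer_carrier[of a \<Phi> b] by auto

lemma wf_netI:
  "\<Phi> \<noteq> [] \<Longrightarrow> (\<forall>k\<in>set (a # layer_dims \<Phi>). 1 \<le> k) \<Longrightarrow>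
   (\<forall>j<length \<Phi>. fst (\<Phi>!j) \<in> carrier_mat ((a # layer_dims \<Phi>) ! (j+1)) ((a # layer_dims \<Phi>) ! j)) \<Longrightarrow>
   wf_net a \<Phi> (last (layer_dims \<Phi>))"
proof (induction a \<Phi> "last (layer_dims \<Phi>)" rule: wf_net.induct)
  case (2 a W B)
  then show ?case by (auto dest: spec[of _ 0])
next
  case (3 a W B l L)
  have "wf_net (dim_vec B) (l#L) (last (layer_dims (l#L)))"
  proof (rule "3.hyps")
    show "\<forall>j<length (l#L). fst ((l#L)!j)
            \<in> carrier_mat ((dim_vec B # layer_dims (l#L)) ! (j+1)) ((dim_vec B # layer_dims (l#L)) ! j)"
      using "3.prems"(3) by (auto dest: spec[of _ "Suc _"])
  qed (use "3.prems" in \<open>(cases l, auto)+\<close>)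
  then show ?case using "3.prems" by (cases l) (auto dest: spec[of _ 0])
qed auto

lemma is_net_imp_wf_net: "is_net \<Phi> \<Longrightarrow> wf_net (hd (arch \<Phi>)) \<Phi> (last (arch \<Phi>))"
proof -
  assume \<Phi>: "is_net \<Phi>"
  then have "\<Phi> \<noteq> []" by (auto simp: is_net_def)
  moreover have "arch \<Phi> = dim_col (fst (hd \<Phi>)) # layer_dims \<Phi>"
    by (simp add: arch_def layer_dims_def)
  moreover have "wf_net (dim_col (fst (hd \<Phi>))) \<Phi> (last (layer_dims \<Phi>))"
    by (rule wf_netI) (use \<Phi> calculation in \<open>auto simp: is_net_def\<close>)
  ultimately show ?thesis by (simp add: layer_dims_def)
qed

fun net_comp :: "net \<Rightarrow> net \<Rightarrow> net" where
  "net_comp [] \<Psi> = \<Psi>"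
| "net_comp [(W,B)] \<Psi> =
     (case \<Psi> of [] \<Rightarrow> [(W,B)] | (W2,B2)#R \<Rightarrow> (W2 * W, W2 *\<^sub>v B + B2) # R)"
| "net_comp ((W,B)#l#L) \<Psi> = (W,B) # net_comp (l#L) \<Psi>"

lemma wf_net_comp:
  assumes "wf_net a \<Phi> k" "wf_net k \<Psi> b"
  shows "wf_net a (net_comp \<Phi> \<Psi>) b \<and> length (net_comp \<Phi> \<Psi>) = length \<Phi> + length \<Psi> - 1 \<and>
    set (layer_dims (net_comp \<Phi> \<Psi>)) \<subseteq> set (layer_dims \<Phi>) \<union> set (layer_dims \<Psi>) \<and>
    (\<forall>x. dim_vec x = a \<longrightarrow> realize (net_comp \<Phi> \<Psi>) x = realize \<Psi> (realize \<Phi> x))"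
  using assms
proof (induction \<Phi> \<Psi> arbitrary: a rule: net_comp.induct)
  case (2 W B \<Psi>)
  obtain W2 B2 R where \<Psi>: "\<Psi> = (W2,B2)#R" using "2.prems"(2) by (cases \<Psi>) auto
  have W: "W \<in> carrier_mat k a" "dim_vec B = k" "1 \<le> a" using "2.prems"(1) by auto
  show ?case
  proof (cases R)
    case Nil
    then have "W2 \<in> carrier_mat b k" using "2.prems"(2) \<Psi> by auto
    then show ?thesis using "2.prems"(2) W \<Psi> Nil
      by (auto simp: mult_add_distrib_mat_vec[of W2 b k] assoc_add_vec[of _ b])
  next
    case (Cons l L)
    then have "W2 \<in> carrier_mat (dim_vec B2) k" using "2.prems"(2) \<Psi> by auto
    then show ?thesis using "2.prems"(2) W \<Psi> Cons
      by (auto simp: mult_add_distrib_mat_vec[of W2 "dim_vec B2" k] assoc_add_vec[of _ "dim_vec B2"])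
  qed
next
  case (3 W B l L \<Psi>)
  have W: "W \<in> carrier_mat (dim_vec B) a" "wf_net (dim_vec B) (l#L) k" "1 \<le> a" "1 \<le> dim_vec B"
    using "3.prems"(1) by auto
  note IH = "3.IH"[OF W(2) "3.prems"(2)]
  obtain l' L' where LL: "net_comp (l#L) \<Psi> = l' # L'" using IH by (cases "net_comp (l#L) \<Psi>") auto
  show ?case using IH W LL "3.prems"(2) by (cases l', cases \<Psi>) auto
qed auto

text \<open>\<open>L\<close> is the length of the architecture (number of affine layers plus one) and \<open>w\<close>
  bounds all its entries.\<close>
definition realizable :: "nat \<Rightarrow> nat \<Rightarrow> nat \<Rightarrow> real \<Rightarrow> (real vec \<Rightarrow> real vec) \<Rightarrow> bool" where
  "realizable a b L w h \<longleftrightarrow> (\<exists>\<Phi>. wf_net a \<Phi> b \<and> length \<Phi> + 1 = L \<and>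
      real (Max (set (a # layer_dims \<Phi>))) \<le> w \<and> (\<forall>x. dim_vec x = a \<longrightarrow> realize \<Phi> x = h x))"

lemma realizable_mono: "realizable a b L w h \<Longrightarrow> w \<le> w' \<Longrightarrow> realizable a b L w' h"
  unfolding realizable_def by force

lemma realizable_cong:
  "realizable a b L w h \<Longrightarrow> (\<And>x. dim_vec x = a \<Longrightarrow> h x = h' x) \<Longrightarrow> realizable a b L w h'"
  unfolding realizable_def by force

lemma realizable_dims:
  assumes "realizable a b L w h"
  shows "1 \<le> a \<and> 1 \<le> b \<and> real a \<le> w \<and> real b \<le> w \<and> 2 \<le> L"
proof -
  obtain \<Phi> where \<Phi>: "wf_net a \<Phi> b" "length \<Phi> + 1 = L" "real (Max (set (a # layer_dims \<Phi>))) \<le> w"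
    using assms unfolding realizable_def by blast
  have "a \<le> Max (set (a # layer_dims \<Phi>))" "b \<le> Max (set (a # layer_dims \<Phi>))"
    using wf_net_out_in_dims[OF \<Phi>(1)] by auto
  then show ?thesis using \<Phi> wf_net_in_out_pos[OF \<Phi>(1)] by (cases \<Phi>) auto
qed

lemma realizable_dim_vec: "realizable a b L w h \<Longrightarrow> dim_vec x = a \<Longrightarrow> dim_vec (h x) = b"
  unfolding realizable_def using dim_realize by metis

lemma realizable_comp:
  assumes "realizable a k L1 w1 h1" "realizable k b L2 w2 h2"
  shows "realizable a b (L1 + L2 - 2) (max w1 w2) (\<lambda>x. h2 (h1 x))"
proof -
  obtain \<Phi> where \<Phi>: "wf_net a \<Phi> k" "length \<Phi> + 1 = L1" "real (Max (set (a # layer_dims \<Phi>))) \<le> w1"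
      "\<forall>x. dim_vec x = a \<longrightarrow> realize \<Phi> x = h1 x"
    using assms(1) unfolding realizable_def by blast
  obtain \<Psi> where \<Psi>: "wf_net k \<Psi> b" "length \<Psi> + 1 = L2" "real (Max (set (k # layer_dims \<Psi>))) \<le> w2"
      "\<forall>x. dim_vec x = k \<longrightarrow> realize \<Psi> x = h2 x"
    using assms(2) unfolding realizable_def by blast
  note C = wf_net_comp[OF \<Phi>(1) \<Psi>(1)]
  have "\<Phi> \<noteq> []" "\<Psi> \<noteq> []" using \<Phi>(1) \<Psi>(1) by auto
  have "Max (set (a # layer_dims (net_comp \<Phi> \<Psi>)))
      \<le> max (Max (set (a # layer_dims \<Phi>))) (Max (set (k # layer_dims \<Psi>)))"
    using C by (subst Max_le_iff) (auto simp: le_max_iff_disj)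
  then have "real (Max (set (a # layer_dims (net_comp \<Phi> \<Psi>)))) \<le> max w1 w2"
    using \<Phi>(3) \<Psi>(3) by (smt (verit) max.cobounded1 max_def of_nat_max of_nat_mono)
  moreover have "\<forall>x. dim_vec x = a \<longrightarrow> realize (net_comp \<Phi> \<Psi>) x = h2 (h1 x)"
    using C \<Phi>(4) \<Psi>(4) dim_realize[OF \<Phi>(1)] by auto
  ultimately show ?thesis unfolding realizable_def using C \<Phi>(2) \<Psi>(2) \<open>\<Phi> \<noteq> []\<close> \<open>\<Psi> \<noteq> []\<close>
    by (intro exI[of _ "net_comp \<Phi> \<Psi>"]) (auto simp: Suc_le_eq)
qed

lemma realizable_affine:
  "A \<in> carrier_mat b a \<Longrightarrow> dim_vec c = b \<Longrightarrow> 1 \<le> a \<Longrightarrow> 1 \<le> b \<Longrightarrow>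
   realizable a b 2 (max a b) (\<lambda>x. A *\<^sub>v x + c)"
  unfolding realizable_def by (intro exI[of _ "[(A,c)]"]) auto

lemma realizable_of_net:
  assumes "is_net \<Phi>" "hd (arch \<Phi>) = a" "last (arch \<Phi>) = b" "\<And>x. dim_vec x = a \<Longrightarrow> realize \<Phi> x = h x"
  shows "realizable a b (length (arch \<Phi>)) (real (maxnorm (arch \<Phi>))) h"
proof -
  have \<Phi>: "wf_net a \<Phi> b" using is_net_imp_wf_net[OF assms(1)] assms by simp
  moreover have "arch \<Phi> = a # layer_dims \<Phi>" by (rule arch_wf_net[OF \<Phi>])
  moreover have "length (arch \<Phi>) = length \<Phi> + 1" by (simp add: arch_def)
  ultimately show ?thesis unfolding realizable_def maxnorm_def using assms(4)
    by (intro exI[of _ \<Phi>]) auto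
qed

lemma length_arch_ge_3: "is_net \<Phi> \<Longrightarrow> 3 \<le> length (arch \<Phi>)"
  by (auto simp: is_net_def arch_def)

lemma sum_if_eq_mult:
  "(i::nat) < n \<Longrightarrow> (\<Sum>l\<in>{0..<n}. (if l = i then a else 0) * (f l::real)) = a * f i"
proof -
  assume "i < n"
  have "(\<Sum>l\<in>{0..<n}. (if l = i then a else 0) * f l) = (\<Sum>l\<in>{0..<n}. if l = i then a * f l else 0)"
    by (rule sum.cong) auto
  also have "\<dots> = a * f i" using \<open>i < n\<close> by (subst sum.delta) auto
  finally show ?thesis .
qed

lemma sum_if_eq2_mult:
  "(i::nat) < n \<Longrightarrow> j < n \<Longrightarrow> i \<noteq> j \<Longrightarrow>
   (\<Sum>l\<in>{0..<n}. (if l = i then a else if l = j then b else 0) * (f l::real)) = a * f i + b * f j"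
proof -
  assume ij: "i < n" "j < n" "i \<noteq> j"
  have "(\<Sum>l\<in>{0..<n}. (if l = i then a else if l = j then b else 0) * f l)
      = (\<Sum>l\<in>{0..<n}. (if l = i then a else 0) * f l + (if l = j then b else 0) * f l)"
    by (rule sum.cong) (use ij in auto)
  also have "\<dots> = a * f i + b * f j" using ij by (simp add: sum.distrib sum_if_eq_mult)
  finally show ?thesis .
qed

text \<open>Identity networks of any depth rest on \<open>x = relu x - relu (-x)\<close>: the pair
  \<open>(relu x, relu (-x))\<close> passes unchanged through further ReLU layers.\<close>
definition pm_split_mat :: "nat \<Rightarrow> real mat" where
  "pm_split_mat k = mat (2*k) k
     (\<lambda>(i,j). if i < k then (if j = i then 1 else 0) else (if j = i - k then -1 else 0))"

definition pm_keep_mat :: "nat \<Rightarrow> real mat" where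
  "pm_keep_mat k = mat (2*k) (2*k)
     (\<lambda>(i,j). if i < k then (if j = i then 1 else if j = i + k then -1 else 0)
              else (if j = i then 1 else if j = i - k then -1 else 0))"

definition pm_merge_mat :: "nat \<Rightarrow> real mat" where
  "pm_merge_mat k = mat k (2*k) (\<lambda>(i,j). if j = i then 1 else if j = i + k then -1 else 0)"

definition pm_split :: "nat \<Rightarrow> real vec \<Rightarrow> real vec" where
  "pm_split k x = vec (2*k) (\<lambda>i. if i < k then max 0 (x$i) else max 0 (-(x$(i-k))))"

lemma relu_pm_split_mat: "dim_vec x = k \<Longrightarrow> relu (pm_split_mat k *\<^sub>v x + 0\<^sub>v (2*k)) = pm_split k x"
  by (rule eq_vecI) (auto simp: relu_def pm_split_def pm_split_mat_def scalar_prod_def sum_if_eq_mult)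

lemma relu_pm_keep_mat: "dim_vec x = k \<Longrightarrow> relu (pm_keep_mat k *\<^sub>v pm_split k x + 0\<^sub>v (2*k)) = pm_split k x"
proof (rule eq_vecI)
  fix i assume x: "dim_vec x = k" and "i < dim_vec (pm_split k x)"
  then have i: "i < 2*k" by (simp add: pm_split_def)
  show "relu (pm_keep_mat k *\<^sub>v pm_split k x + 0\<^sub>v (2*k)) $ i = pm_split k x $ i"
  proof (cases "i < k")
    case True
    then have "(pm_keep_mat k *\<^sub>v pm_split k x) $ i = pm_split k x $ i - pm_split k x $ (i+k)"
      using i x by (simp add: pm_keep_mat_def scalar_prod_def sum_if_eq2_mult pm_split_def)
    then show ?thesis using True i by (simp add: relu_def pm_split_def max_def)
  next
    case False
    then have "(pm_keep_mat k *\<^sub>v pm_split k x) $ i = pm_split k x $ i - pm_split k x $ (i-k)"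
      using i x by (simp add: pm_keep_mat_def scalar_prod_def sum_if_eq2_mult pm_split_def)
    then show ?thesis using False i by (simp add: relu_def pm_split_def max_def)
  qed
qed (simp add: relu_def pm_split_def pm_keep_mat_def)

lemma pm_merge_mat_pm_split: "dim_vec x = k \<Longrightarrow> pm_merge_mat k *\<^sub>v pm_split k x + 0\<^sub>v k = x"
proof (rule eq_vecI)
  fix i assume x: "dim_vec x = k" and i: "i < dim_vec x"
  have "(pm_merge_mat k *\<^sub>v pm_split k x) $ i = pm_split k x $ i - pm_split k x $ (i+k)"
    using i x by (simp add: pm_merge_mat_def scalar_prod_def sum_if_eq2_mult pm_split_def)
  then show "(pm_merge_mat k *\<^sub>v pm_split k x + 0\<^sub>v k) $ i = x $ i" using i x by (simp add: pm_split_def)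
qed (simp add: pm_merge_mat_def)

fun pm_id_tail :: "nat \<Rightarrow> nat \<Rightarrow> net" where
  "pm_id_tail k 0 = [(pm_merge_mat k, 0\<^sub>v k)]"
| "pm_id_tail k (Suc n) = (pm_keep_mat k, 0\<^sub>v (2*k)) # pm_id_tail k n"

lemma wf_net_pm_id_tail:
  assumes "1 \<le> k"
  shows "wf_net (2*k) (pm_id_tail k n) k \<and> length (pm_id_tail k n) = n + 1 \<and>
    set (layer_dims (pm_id_tail k n)) \<subseteq> {2*k, k} \<and>
    (\<forall>x. dim_vec x = k \<longrightarrow> realize (pm_id_tail k n) (pm_split k x) = x)"
proof (induction n)
  case 0
  then show ?case using assms pm_merge_mat_pm_split by (auto simp: pm_merge_mat_def)
next
  case (Suc n)
  obtain l L where "pm_id_tail k n = l # L" by (cases n) auto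
  then show ?case using Suc assms relu_pm_keep_mat by (cases l) (auto simp: pm_keep_mat_def)
qed

lemma realizable_id:
  assumes "1 \<le> k" "3 \<le> L"
  shows "realizable k k L (2 * real k) (\<lambda>x. x)"
proof -
  note tail = wf_net_pm_id_tail[OF assms(1), of "L - 3"]
  obtain l R where lR: "pm_id_tail k (L-3) = l # R" by (cases "L - 3") auto
  define \<Phi> where "\<Phi> = (pm_split_mat k, 0\<^sub>v (2*k)) # pm_id_tail k (L-3)"
  have "wf_net k \<Phi> k" using tail lR assms unfolding \<Phi>_def by (cases l) (auto simp: pm_split_mat_def)
  moreover have "set (k # layer_dims \<Phi>) \<subseteq> {2*k, k}" using tail by (auto simp: \<Phi>_def)
  then have "Max (set (k # layer_dims \<Phi>)) \<le> 2*k" by (subst Max_le_iff) auto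
  then have "real (Max (set (k # layer_dims \<Phi>))) \<le> 2 * real k"
    by (metis of_nat_le_iff of_nat_mult of_nat_numeral)
  moreover have "length \<Phi> + 1 = L" using tail assms by (simp add: \<Phi>_def)
  moreover have "\<forall>x. dim_vec x = k \<longrightarrow> realize \<Phi> x = x"
    using tail lR relu_pm_split_mat unfolding \<Phi>_def by (cases l) auto
  ultimately show ?thesis unfolding realizable_def by auto
qed

lemma realizable_deepen_after:
  assumes "realizable a b L w h" "L \<le> L'"
  shows "realizable a b L' (max w (2 * real b)) h"
proof (cases "L = L'")
  case True
  then show ?thesis using assms realizable_mono by auto
next
  case False
  have b: "1 \<le> b" "2 \<le> L" using realizable_dims[OF assms(1)] by auto
  have "realizable b b (L' - L + 2) (2 * real b) (\<lambda>x. x)" by (rule realizable_id) (use b False assms in auto)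
  from realizable_comp[OF assms(1) this] show ?thesis using b assms by (simp add: algebra_simps)
qed

lemma realizable_deepen_before:
  assumes "realizable a b L w h" "L \<le> L'"
  shows "realizable a b L' (max w (2 * real a)) h"
proof (cases "L = L'")
  case True
  then show ?thesis using assms realizable_mono by auto
next
  case False
  have a: "1 \<le> a" "2 \<le> L" using realizable_dims[OF assms(1)] by auto
  have "realizable a a (L' - L + 2) (2 * real a) (\<lambda>x. x)" by (rule realizable_id) (use a False assms in auto)
  from realizable_comp[OF this assms(1)] show ?thesis using a assms by (simp add: algebra_simps max.commute)
qed

lemma zero_mat_mult_vec: "dim_vec v = c \<Longrightarrow> 0\<^sub>m r c *\<^sub>v v = (0\<^sub>v r :: real vec)"
  by (rule eq_vecI) (auto simp: scalar_prod_def)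

lemma append_vec_plus:
  "dim_vec u = dim_vec u' \<Longrightarrow> dim_vec v = dim_vec v' \<Longrightarrow> (u @\<^sub>v v) + (u' @\<^sub>v v') = (u + u') @\<^sub>v (v + v')"
  by (rule eq_vecI) auto

definition block_diag_mat :: "real mat \<Rightarrow> real mat \<Rightarrow> real mat" where
  "block_diag_mat W1 W2 =
     four_block_mat W1 (0\<^sub>m (dim_row W1) (dim_col W2)) (0\<^sub>m (dim_row W2) (dim_col W1)) W2"

lemma block_diag_mat_carrier:
  "W1 \<in> carrier_mat r1 c1 \<Longrightarrow> W2 \<in> carrier_mat r2 c2 \<Longrightarrow> block_diag_mat W1 W2 \<in> carrier_mat (r1+r2) (c1+c2)"
  unfolding block_diag_mat_def by (rule four_block_carrier_mat) auto

lemma block_diag_mat_mult_append_vec: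
  "W1 \<in> carrier_mat r1 c1 \<Longrightarrow> W2 \<in> carrier_mat r2 c2 \<Longrightarrow> dim_vec u = c1 \<Longrightarrow> dim_vec v = c2 \<Longrightarrow>
   block_diag_mat W1 W2 *\<^sub>v (u @\<^sub>v v) = (W1 *\<^sub>v u) @\<^sub>v (W2 *\<^sub>v v)"
  unfolding block_diag_mat_def
  by (subst four_block_mat_mult_vec[of W1 r1 c1 _ c2 _ r2 W2]) (auto simp: zero_mat_mult_vec)

fun net_block_diag :: "net \<Rightarrow> net \<Rightarrow> net" where
  "net_block_diag ((W1,B1)#L1) ((W2,B2)#L2) = (block_diag_mat W1 W2, B1 @\<^sub>v B2) # net_block_diag L1 L2"
| "net_block_diag _ _ = []"

lemma wf_net_block_diag:
  "length \<Psi>1 = length \<Psi>2 \<Longrightarrow> wf_net k1 \<Psi>1 p1 \<Longrightarrow> wf_net k2 \<Psi>2 p2 \<Longrightarrow>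
   wf_net (k1+k2) (net_block_diag \<Psi>1 \<Psi>2) (p1+p2) \<and> length (net_block_diag \<Psi>1 \<Psi>2) = length \<Psi>1 \<and>
   layer_dims (net_block_diag \<Psi>1 \<Psi>2) = map2 (+) (layer_dims \<Psi>1) (layer_dims \<Psi>2) \<and>
   (\<forall>u v. dim_vec u = k1 \<longrightarrow> dim_vec v = k2 \<longrightarrow>
      realize (net_block_diag \<Psi>1 \<Psi>2) (u @\<^sub>v v) = realize \<Psi>1 u @\<^sub>v realize \<Psi>2 v)"
proof (induction \<Psi>1 \<Psi>2 arbitrary: k1 k2 rule: list_induct2)
  case Nil
  then show ?case by simp
next
  case (Cons x xs y ys)
  obtain W1 B1 W2 B2 where xy: "x = (W1,B1)" "y = (W2,B2)" by (cases x, cases y)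
  show ?case
  proof (cases xs)
    case Nil
    then show ?thesis using Cons xy
      by (auto simp: block_diag_mat_carrier block_diag_mat_mult_append_vec append_vec_plus)
  next
    case (Cons l L)
    obtain l' L' where ys: "ys = l' # L'" using Cons \<open>length xs = length ys\<close> by (cases ys) auto
    have W: "W1 \<in> carrier_mat (dim_vec B1) k1" "W2 \<in> carrier_mat (dim_vec B2) k2"
       "1 \<le> k1" "1 \<le> k2" "1 \<le> dim_vec B1" "1 \<le> dim_vec B2"
       "wf_net (dim_vec B1) xs p1" "wf_net (dim_vec B2) ys p2"
      using Cons.prems xy Cons ys by auto
    note IH = "Cons.IH"[OF W(7,8)]
    obtain m M where mM: "net_block_diag xs ys = m # M" using IH Cons by (cases "net_block_diag xs ys") auto
    show ?thesis using W xy IH mM Cons ys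
      by (cases m) (auto simp: block_diag_mat_carrier block_diag_mat_mult_append_vec
          append_vec_plus relu_append_vec)
  qed
qed

lemma real_Max_le: "(\<And>k. k \<in> set (a # l) \<Longrightarrow> real k \<le> w) \<Longrightarrow> real (Max (set (a # l))) \<le> w"
  by (metis List.finite_set Max_in empty_iff list.set_intros(1))

lemma realizable_append_vec:
  assumes "realizable a p1 L w1 h1" "realizable a p2 L w2 h2"
  shows "realizable a (p1+p2) L (w1+w2) (\<lambda>x. h1 x @\<^sub>v h2 x)"
proof -
  obtain \<Phi>1 where \<Phi>1: "wf_net a \<Phi>1 p1" "length \<Phi>1 + 1 = L"
      "real (Max (set (a # layer_dims \<Phi>1))) \<le> w1" "\<forall>x. dim_vec x = a \<longrightarrow> realize \<Phi>1 x = h1 x"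
    using assms(1) unfolding realizable_def by blast
  obtain \<Phi>2 where \<Phi>2: "wf_net a \<Phi>2 p2" "length \<Phi>2 + 1 = L"
      "real (Max (set (a # layer_dims \<Phi>2))) \<le> w2" "\<forall>x. dim_vec x = a \<longrightarrow> realize \<Phi>2 x = h2 x"
    using assms(2) unfolding realizable_def by blast
  obtain W1 B1 L1 where 1: "\<Phi>1 = (W1,B1)#L1" using \<Phi>1(1) by (cases \<Phi>1) auto
  obtain W2 B2 L2 where 2: "\<Phi>2 = (W2,B2)#L2" using \<Phi>2(1) by (cases \<Phi>2) auto
  have len: "length L1 = length L2" using \<Phi>1(2) \<Phi>2(2) 1 2 by simp
  have w1: "\<And>k. k \<in> set (a # layer_dims \<Phi>1) \<Longrightarrow> real k \<le> w1"
    using \<Phi>1(3) by (meson List.finite_set Max_ge of_nat_mono order_trans)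
  have w2: "\<And>k. k \<in> set (a # layer_dims \<Phi>2) \<Longrightarrow> real k \<le> w2"
    using \<Phi>2(3) by (meson List.finite_set Max_ge of_nat_mono order_trans)
  define \<Psi> where "\<Psi> = (W1 @\<^sub>r W2, B1 @\<^sub>v B2) # net_block_diag L1 L2"
  show ?thesis
  proof (cases L1)
    case Nil
    then have "L2 = []" using len by simp
    then have W: "W1 \<in> carrier_mat p1 a" "W2 \<in> carrier_mat p2 a" "dim_vec B1 = p1" "dim_vec B2 = p2"
      "1 \<le> a" "1 \<le> p1" "1 \<le> p2"
      using \<Phi>1(1) \<Phi>2(1) 1 2 Nil by auto
    have "wf_net a \<Psi> (p1+p2)" using W \<open>L2 = []\<close> Nil by (auto simp: \<Psi>_def)
    moreover have "real (Max (set (a # layer_dims \<Psi>))) \<le> w1 + w2"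
      using w1[of a] w2[of p2] w1[of p1] w2[of a] W 1 2 \<open>L2 = []\<close> Nil
      by (intro real_Max_le) (auto simp: \<Psi>_def)
    moreover have "\<forall>x. dim_vec x = a \<longrightarrow> realize \<Psi> x = h1 x @\<^sub>v h2 x"
      using W \<Phi>1(4) \<Phi>2(4) 1 2 Nil \<open>L2 = []\<close> by (auto simp: \<Psi>_def mat_mult_append append_vec_plus)
    ultimately show ?thesis unfolding realizable_def using \<Phi>1(2) 1 Nil by (intro exI[of _ \<Psi>]) (auto simp: \<Psi>_def)
  next
    case (Cons l R)
    obtain l' R' where L2: "L2 = l' # R'" using len Cons by (cases L2) auto
    have W: "W1 \<in> carrier_mat (dim_vec B1) a" "W2 \<in> carrier_mat (dim_vec B2) a" "1 \<le> a"
      "1 \<le> dim_vec B1" "1 \<le> dim_vec B2" "wf_net (dim_vec B1) L1 p1" "wf_net (dim_vec B2) L2 p2"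
      using \<Phi>1(1) \<Phi>2(1) 1 2 Cons L2 by auto
    note D = wf_net_block_diag[OF len W(6,7)]
    obtain m M where mM: "net_block_diag L1 L2 = m # M" using D Cons by (cases "net_block_diag L1 L2") auto
    have "wf_net a \<Psi> (p1+p2)" using W D mM by (cases m) (auto simp: \<Psi>_def)
    moreover have "real (Max (set (a # layer_dims \<Psi>))) \<le> w1 + w2"
    proof (intro real_Max_le)
      fix k assume k: "k \<in> set (a # layer_dims \<Psi>)"
      have "real a \<le> w1 + w2" "real (dim_vec B1 + dim_vec B2) \<le> w1 + w2"
        using w1[of a] w2[of a] w1[of "dim_vec B1"] w2[of "dim_vec B2"] 1 2 by auto
      moreover have "real (x + y) \<le> w1 + w2" if "(x, y) \<in> set (zip (layer_dims L1) (layer_dims L2))" for x y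
        using w1[of x] w2[of y] 1 2 set_zip_leftD[OF that] set_zip_rightD[OF that] by auto
      ultimately show "real k \<le> w1 + w2" using k D by (auto simp: \<Psi>_def)
    qed
    moreover have "realize \<Psi> x = h1 x @\<^sub>v h2 x" if x: "dim_vec x = a" for x
    proof -
      have "(W1 @\<^sub>r W2) *\<^sub>v x = (W1 *\<^sub>v x) @\<^sub>v (W2 *\<^sub>v x)"
        using W(1,2) x by (intro mat_mult_append) auto
      then have "relu ((W1 @\<^sub>r W2) *\<^sub>v x + (B1 @\<^sub>v B2)) = relu (W1 *\<^sub>v x + B1) @\<^sub>v relu (W2 *\<^sub>v x + B2)"
        using W(1,2) by (simp add: append_vec_plus relu_append_vec)
      then have "realize \<Psi> x = realize L1 (relu (W1 *\<^sub>v x + B1)) @\<^sub>v realize L2 (relu (W2 *\<^sub>v x + B2))"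
        using mM D W by (simp add: \<Psi>_def)
      also have "\<dots> = h1 x @\<^sub>v h2 x" using \<Phi>1(4) \<Phi>2(4) x 1 2 Cons L2 by auto
      finally show ?thesis .
    qed
    ultimately show ?thesis unfolding realizable_def using \<Phi>1(2) 1 D by (intro exI[of _ \<Psi>]) (auto simp: \<Psi>_def)
  qed
qed

lemma realizable_affine_comp:
  assumes "realizable a b L w h" "A \<in> carrier_mat p b" "dim_vec c = p" "1 \<le> p"
  shows "realizable a p L (max w (real p)) (\<lambda>x. A *\<^sub>v h x + c)"
proof -
  have b: "1 \<le> b" "real b \<le> w" "2 \<le> L" using realizable_dims[OF assms(1)] by auto
  have "realizable b p 2 (max b p) (\<lambda>x. A *\<^sub>v x + c)" by (rule realizable_affine) (use assms b in auto)
  from realizable_comp[OF assms(1) this] have "realizable a p L (max w (real (max b p))) (\<lambda>x. A *\<^sub>v h x + c)"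
    by simp
  then show ?thesis by (rule realizable_mono) (use b in auto)
qed

lemma realizable_add_const:
  assumes "realizable a p L w h" "dim_vec c = p"
  shows "realizable a p L w (\<lambda>x. h x + c)"
proof -
  have p: "1 \<le> p" "real p \<le> w" using realizable_dims[OF assms(1)] by auto
  have "max w (real p) = w" using p(2) by (rule max_absorb1)
  with realizable_affine_comp[OF assms(1) one_carrier_mat assms(2) p(1)]
  have "realizable a p L w (\<lambda>x. 1\<^sub>m p *\<^sub>v h x + c)" by simp
  then show ?thesis
  proof (rule realizable_cong)
    fix x :: "real vec" assume "dim_vec x = a"
    then have "h x \<in> carrier_vec p" by (rule carrier_vecI[OF realizable_dim_vec[OF assms(1)]])
    then show "1\<^sub>m p *\<^sub>v h x + c = h x + c" by simp
  qed
qed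

definition lincomb_mat :: "nat \<Rightarrow> real \<Rightarrow> real \<Rightarrow> real mat" where
  "lincomb_mat p c1 c2 = mat p (2*p) (\<lambda>(i,j). if j = i then c1 else if j = i + p then c2 else 0)"

lemma lincomb_mat_mult_append_vec:
  "dim_vec u = p \<Longrightarrow> dim_vec v = p \<Longrightarrow> lincomb_mat p c1 c2 *\<^sub>v (u @\<^sub>v v) + 0\<^sub>v p = c1 \<cdot>\<^sub>v u + c2 \<cdot>\<^sub>v v"
  by (rule eq_vecI) (auto simp: lincomb_mat_def scalar_prod_def sum_if_eq2_mult)

lemma realizable_lincomb:
  assumes "realizable a p L w1 h1" "realizable a p L w2 h2"
  shows "realizable a p L (w1 + w2) (\<lambda>x. c1 \<cdot>\<^sub>v h1 x + c2 \<cdot>\<^sub>v h2 x)"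
proof -
  have p: "1 \<le> p" "real p \<le> w1" "real p \<le> w2"
    using realizable_dims[OF assms(1)] realizable_dims[OF assms(2)] by auto
  have "realizable a p L (max (w1+w2) (real p)) (\<lambda>x. lincomb_mat p c1 c2 *\<^sub>v (h1 x @\<^sub>v h2 x) + 0\<^sub>v p)"
    by (rule realizable_affine_comp[OF realizable_append_vec[OF assms]])
      (use p in \<open>auto simp: lincomb_mat_def\<close>)
  then show ?thesis
    by (rule realizable_cong[OF realizable_mono]) (use p in \<open>auto simp: lincomb_mat_mult_append_vec
        realizable_dim_vec[OF assms(1)] realizable_dim_vec[OF assms(2)]\<close>)
qed

lemma realizable_add:
  assumes "realizable a p L w1 h1" "realizable a p L w2 h2"
  shows "realizable a p L (w1 + w2) (\<lambda>x. h1 x + h2 x)"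
  using realizable_lincomb[OF assms, of 1 1] by (rule realizable_cong) simp

abbreviation vec1 :: "real \<Rightarrow> real vec" where "vec1 y \<equiv> vec 1 (\<lambda>_. y)"

lemma realizable_const:
  assumes "1 \<le> a" "2 \<le> L"
  shows "realizable a 1 L (max (real a) 2) (\<lambda>_. vec1 y)"
proof -
  have "realizable a 1 2 (max a 1) (\<lambda>x. 0\<^sub>m 1 a *\<^sub>v x + vec1 y)"
    by (rule realizable_affine) (use assms in auto)
  from realizable_deepen_after[OF this assms(2)] show ?thesis
    by (rule realizable_cong[OF realizable_mono]) (auto simp: max_def zero_mat_mult_vec)
qed

lemma realizable_scalar_affine:
  assumes "realizable a 1 L w (\<lambda>x. vec1 (u x))"
  shows "realizable a 1 L w (\<lambda>x. vec1 (\<alpha> * u x + \<beta>))"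
proof -
  have "1 \<le> w" using realizable_dims[OF assms] by auto
  have "realizable a 1 L (max w (real 1)) (\<lambda>x. mat 1 1 (\<lambda>_. \<alpha>) *\<^sub>v vec1 (u x) + vec1 \<beta>)"
    by (rule realizable_affine_comp[OF assms]) auto
  then show ?thesis
    by (rule realizable_cong[OF realizable_mono]) (use \<open>1 \<le> w\<close> in \<open>auto simp: scalar_prod_def\<close>)
qed

lemma realizable_scalar_lincomb:
  assumes "realizable a 1 L w1 (\<lambda>x. vec1 (u1 x))" "realizable a 1 L w2 (\<lambda>x. vec1 (u2 x))"
  shows "realizable a 1 L (w1 + w2) (\<lambda>x. vec1 (c1 * u1 x + c2 * u2 x))"
  using realizable_lincomb[OF assms, of c1 c2] by (rule realizable_cong) auto

lemma realizable_scalar_sum: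
  assumes "finite I" "I \<noteq> {}" "\<And>i. i \<in> I \<Longrightarrow> realizable a 1 L (w i) (\<lambda>x. vec1 (u i x))"
  shows "realizable a 1 L (\<Sum>i\<in>I. w i) (\<lambda>x. vec1 (\<Sum>i\<in>I. u i x))"
  using assms
proof (induction I rule: finite_ne_induct)
  case (insert i F)
  then show ?case using realizable_scalar_lincomb[of a L "w i" "u i" "\<Sum>i\<in>F. w i", of _ 1 1] by simp
qed simp

definition grid_count :: "real \<Rightarrow> nat \<Rightarrow> real \<Rightarrow> nat" where
  "grid_count T K s = card {j. j \<le> K \<and> T * real j / real K < s}"

lemma finite_flrK_set: "finite ({0} \<union> {T * real j / real K | j. j \<le> K \<and> T * real j / real K < s})"
proof -
  have "{T * real j / real K | j. j \<le> K \<and> T * real j / real K < s} \<subseteq> (\<lambda>j. T * real j / real K) ` {..K}"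
    by auto
  then show ?thesis by (meson finite_UnI finite_atMost finite_imageI finite_insert finite.emptyI finite_subset)
qed

lemma flrK_cases:
  "flrK T K s = 0 \<or> (\<exists>j. j \<le> K \<and> flrK T K s = T * real j / real K \<and> T * real j / real K < s)"
proof -
  have "flrK T K s \<in> {0} \<union> {T * real j / real K | j. j \<le> K \<and> T * real j / real K < s}"
    unfolding flrK_def by (rule Max_in[OF finite_flrK_set]) auto
  then show ?thesis by auto
qed

lemma grid_count_le:
  assumes "0 < T" "1 \<le> K" "s \<le> T"
  shows "grid_count T K s \<le> K"
proof -
  have "{j. j \<le> K \<and> T * real j / real K < s} \<subseteq> {..<K}"
  proof
    fix j assume j: "j \<in> {j. j \<le> K \<and> T * real j / real K < s}"
    then have "j \<noteq> K" using assms by auto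
    then show "j \<in> {..<K}" using j by auto
  qed
  then show ?thesis unfolding grid_count_def by (metis card_lessThan card_mono finite_lessThan)
qed

lemma grid_count_pos: "0 < s \<Longrightarrow> 1 \<le> grid_count T K s"
proof -
  assume "0 < s"
  then have "0 \<in> {j. j \<le> K \<and> T * real j / real K < s}" by auto
  moreover have "finite {j. j \<le> K \<and> T * real j / real K < s}" by simp
  ultimately show ?thesis unfolding grid_count_def by (metis One_nat_def Suc_leI card_gt_0_iff empty_iff)
qed

lemma grid_count_less:
  assumes "j \<le> K" "T * real j / real K < s"
  shows "grid_count T K (T * real j / real K) < grid_count T K s"
proof -
  have "{i. i \<le> K \<and> T * real i / real K < T * real j / real K} \<subset> {i. i \<le> K \<and> T * real i / real K < s}"
    using assms by auto
  then show ?thesis unfolding grid_count_def by (rule psubset_card_mono[rotated]) simp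
qed

context
  fixes T :: real and K M d :: nat and PX :: real and t :: real
    and X :: "real vec \<Rightarrow> real \<Rightarrow> real vec" and step :: "real \<Rightarrow> real \<Rightarrow> real vec \<Rightarrow> real vec"
  assumes step_realizable: "\<And>s a. realizable d d M PX (step s a)"
    and X_init: "\<And>x. dim_vec x = d \<Longrightarrow> X x t = x"
    and X_step: "\<And>x s. dim_vec x = d \<Longrightarrow> s \<in> {t<..T} \<Longrightarrow>
        X x s = step s (max t (flrK T K s)) (X x (max t (flrK T K s)))"
    and t: "t \<in> {0..T}"
begin

text \<open>Induction on the number of grid points below \<open>s\<close>: each grid point crossed adds one step network.\<close>
lemma realizable_euler_grid:
  "s \<in> {t<..T} \<Longrightarrow> \<exists>j. 1 \<le> j \<and> j \<le> grid_count T K s \<and> realizable d d (j * (M - 2) + 2) PX (\<lambda>x. X x s)"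
proof (induction "grid_count T K s" arbitrary: s rule: less_induct)
  case less
  have M: "2 \<le> M" using realizable_dims[OF step_realizable[of s s]] by simp
  define a where "a = max t (flrK T K s)"
  have Xs: "\<And>x. dim_vec x = d \<Longrightarrow> X x s = step s a (X x a)" using X_step less.prems unfolding a_def by auto
  show ?case
  proof (cases "a = t")
    case True
    have "realizable d d M PX (\<lambda>x. X x s)"
      by (rule realizable_cong[OF step_realizable[of s a]]) (use Xs X_init True in auto)
    moreover have "1 \<le> grid_count T K s" using grid_count_pos less.prems t by auto
    moreover have "1 * (M - 2) + 2 = M" using M by linarith
    ultimately show ?thesis by (intro exI[of _ 1]) simp
  next
    case False
    then have "t < a" "a = flrK T K s" unfolding a_def by auto
    then obtain j where j: "j \<le> K" "a = T * real j / real K" "T * real j / real K < s"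
      using flrK_cases[of T K s] t by auto
    then have "grid_count T K a < grid_count T K s" using grid_count_less by simp
    moreover have "a \<in> {t<..T}" using \<open>t < a\<close> j less.prems by auto
    ultimately obtain i where i: "1 \<le> i" "i \<le> grid_count T K a"
      "realizable d d (i * (M - 2) + 2) PX (\<lambda>x. X x a)"
      using less.hyps by blast
    have eq: "i * (M - 2) + 2 + M - 2 = (i + 1) * (M - 2) + 2" using M by (simp add: add_mult_distrib)
    from realizable_comp[OF i(3) step_realizable[of s a]]
    have "realizable d d ((i + 1) * (M - 2) + 2) PX (\<lambda>x. step s a (X x a))"
      by (simp only: max.idem eq)
    then have "realizable d d ((i + 1) * (M - 2) + 2) PX (\<lambda>x. X x s)"
      by (rule realizable_cong) (simp add: Xs)
    then show ?thesis using i \<open>grid_count T K a < grid_count T K s\<close> by (intro exI[of _ "i + 1"]) auto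
  qed
qed

lemma realizable_euler:
  assumes T: "0 < T" and K: "1 \<le> K" and M: "3 \<le> M" and PX: "2 * real d \<le> PX" and s: "s \<in> {t..T}"
  shows "realizable d d (K * (M - 1) + 1) PX (\<lambda>x. X x s)"
proof (cases "s = t")
  case True
  have "2 \<le> K * (M - 1)" using mult_le_mono[of 1 K 2 "M - 1"] K M by simp
  then have "realizable d d (K * (M - 1) + 1) (2 * real d) (\<lambda>x. x)"
    using realizable_id realizable_dims[OF step_realizable] by simp
  then have "realizable d d (K * (M - 1) + 1) PX (\<lambda>x. x)" using PX by (rule realizable_mono)
  then show ?thesis by (rule realizable_cong) (simp add: X_init True)
next
  case False
  then have "s \<in> {t<..T}" using s by auto
  then obtain j where j: "1 \<le> j" "j \<le> grid_count T K s" "realizable d d (j * (M - 2) + 2) PX (\<lambda>x. X x s)"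
    using realizable_euler_grid by blast
  then have "j \<le> K" using grid_count_le[OF T K] s by (meson atLeastAtMost_iff le_trans)
  moreover obtain M' where "M = M' + 3" using M by (metis add.commute le_iff_add)
  ultimately have "j * (M - 2) + 2 \<le> K * (M - 1) + 1"
    using mult_le_mono1[of j K "M' + 1"] K by (simp add: algebra_simps)
  from realizable_deepen_after[OF j(3) this] show ?thesis
    by (rule realizable_mono) (use PX in auto)
qed

end

definition vec_trunc :: "nat \<Rightarrow> real vec \<Rightarrow> real vec" where
  "vec_trunc d v = vec d (\<lambda>j. if j < dim_vec v then v$j else 0)"

definition mat_vec_junk :: "nat \<Rightarrow> real vec \<Rightarrow> real vec" where
  "mat_vec_junk d v = vec d (\<lambda>i. \<Sum>j\<in>{d..<dim_vec v}. undef_vec (j - d) * v$j)"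

lemma vec_index_ge_dim: "n \<le> j \<Longrightarrow> vec n f $ j = undef_vec (j - n)"
  by transfer (simp add: mk_vec_def)

text \<open>The Brownian and jump increments are not assumed to lie in \<open>\<real>\<^sup>d\<close>. For \<open>dim_vec v \<noteq> d\<close>
  the product \<open>A *\<^sub>v v\<close> reads unspecified entries of the rows of \<open>A\<close> beyond column \<open>d\<close>;
  they contribute a shift that does not depend on \<open>A\<close>.\<close>
lemma mult_mat_vec_trunc:
  assumes A: "A \<in> carrier_mat d d"
  shows "A *\<^sub>v v = A *\<^sub>v vec_trunc d v + mat_vec_junk d v"
proof (rule eq_vecI)
  fix i assume "i < dim_vec (A *\<^sub>v vec_trunc d v + mat_vec_junk d v)"
  then have i: "i < d" by (simp add: mat_vec_junk_def)
  have row: "row A i $ j = (if j < d then A $$ (i,j) else undef_vec (j - d))" for j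
    using A i by (auto simp: row_def vec_index_ge_dim)
  have lhs: "(A *\<^sub>v v) $ i = (\<Sum>j\<in>{0..<dim_vec v}. row A i $ j * v $ j)"
    using A i by (simp add: scalar_prod_def)
  have rhs: "(A *\<^sub>v vec_trunc d v + mat_vec_junk d v) $ i
      = (\<Sum>j\<in>{0..<d}. A $$ (i,j) * (if j < dim_vec v then v$j else 0))
        + (\<Sum>j\<in>{d..<dim_vec v}. undef_vec (j - d) * v$j)"
    using A i by (simp add: scalar_prod_def vec_trunc_def mat_vec_junk_def)
  show "(A *\<^sub>v v) $ i = (A *\<^sub>v vec_trunc d v + mat_vec_junk d v) $ i"
  proof (cases "dim_vec v \<le> d")
    case True
    have "(\<Sum>j\<in>{0..<d}. A $$ (i,j) * (if j < dim_vec v then v$j else 0))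
        = (\<Sum>j\<in>{0..<dim_vec v}. A $$ (i,j) * (if j < dim_vec v then v$j else 0))
          + (\<Sum>j\<in>{dim_vec v..<d}. A $$ (i,j) * (if j < dim_vec v then v$j else 0))"
      by (rule sum.atLeastLessThan_concat[symmetric]) (use True in auto)
    also have "\<dots> = (\<Sum>j\<in>{0..<dim_vec v}. row A i $ j * v $ j)"
      using True row by (auto intro!: sum.cong)
    finally show ?thesis using lhs rhs True by simp
  next
    case False
    have "(\<Sum>j\<in>{0..<dim_vec v}. row A i $ j * v $ j)
        = (\<Sum>j\<in>{0..<d}. row A i $ j * v $ j) + (\<Sum>j\<in>{d..<dim_vec v}. row A i $ j * v $ j)"
      by (rule sum.atLeastLessThan_concat[symmetric]) (use False in auto)
    also have "\<dots> = (\<Sum>j\<in>{0..<d}. A $$ (i,j) * (if j < dim_vec v then v$j else 0))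
        + (\<Sum>j\<in>{d..<dim_vec v}. undef_vec (j - d) * v$j)"
      using False row by (auto intro!: sum.cong arg_cong2[where f="(+)"])
    finally show ?thesis using lhs rhs by simp
  qed
qed (use A in \<open>simp add: mat_vec_junk_def\<close>)

lemma realizable_euler_step:
  fixes b :: "real vec \<Rightarrow> real vec" and \<sigma> F :: "real vec \<Rightarrow> real mat"
  assumes b: "realizable d d Lb wb b"
    and \<sigma>: "\<And>v. dim_vec v = d \<Longrightarrow> realizable d d L\<sigma> w\<sigma> (\<lambda>x. \<sigma> x *\<^sub>v v)"
    and F: "\<And>v. dim_vec v = d \<Longrightarrow> realizable d d LF wF (\<lambda>x. F x *\<^sub>v v)"
    and square: "\<And>x. dim_vec x = d \<Longrightarrow> \<sigma> x \<in> carrier_mat d d \<and> F x \<in> carrier_mat d d"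
    and M: "3 \<le> M" "Lb \<le> M" "L\<sigma> \<le> M" "LF \<le> M"
  shows "realizable d d M (2 * real d + max wb (2 * real d) + max w\<sigma> (2 * real d) + max wF (2 * real d))
     (\<lambda>y. y + h \<cdot>\<^sub>v b y + \<sigma> y *\<^sub>v v1 + F y *\<^sub>v v2)"
proof -
  have d: "1 \<le> d" using realizable_dims[OF b] by simp
  have "realizable d d M (2 * real d) (\<lambda>y. y)" using realizable_id[OF d] M by simp
  moreover have "realizable d d M (max wb (2 * real d)) b"
    using realizable_deepen_before[OF b M(2)] by simp
  ultimately have "realizable d d M (2 * real d + max wb (2 * real d)) (\<lambda>y. 1 \<cdot>\<^sub>v y + h \<cdot>\<^sub>v b y)"
    by (rule realizable_lincomb)
  moreover have "realizable d d M (max w\<sigma> (2 * real d)) (\<lambda>y. \<sigma> y *\<^sub>v vec_trunc d v1)"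
    using realizable_deepen_before[OF \<sigma> M(3), of "vec_trunc d v1"] by (simp add: vec_trunc_def)
  ultimately have "realizable d d M (2 * real d + max wb (2 * real d) + max w\<sigma> (2 * real d))
      (\<lambda>y. (1 \<cdot>\<^sub>v y + h \<cdot>\<^sub>v b y) + \<sigma> y *\<^sub>v vec_trunc d v1)"
    by (rule realizable_add)
  moreover have "realizable d d M (max wF (2 * real d)) (\<lambda>y. F y *\<^sub>v vec_trunc d v2)"
    using realizable_deepen_before[OF F M(4), of "vec_trunc d v2"] by (simp add: vec_trunc_def)
  ultimately have "realizable d d M (2 * real d + max wb (2 * real d) + max w\<sigma> (2 * real d) + max wF (2 * real d))
      (\<lambda>y. ((1 \<cdot>\<^sub>v y + h \<cdot>\<^sub>v b y) + \<sigma> y *\<^sub>v vec_trunc d v1 + F y *\<^sub>v vec_trunc d v2)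
        + (mat_vec_junk d v1 + mat_vec_junk d v2))"
    by (rule realizable_add_const[OF realizable_add]) (simp add: mat_vec_junk_def)
  then show ?thesis
  proof (rule realizable_cong)
    fix y :: "real vec" assume y: "dim_vec y = d"
    have "dim_vec (b y) = d" using realizable_dim_vec[OF b y] .
    then show "((1 \<cdot>\<^sub>v y + h \<cdot>\<^sub>v b y) + \<sigma> y *\<^sub>v vec_trunc d v1 + F y *\<^sub>v vec_trunc d v2)
        + (mat_vec_junk d v1 + mat_vec_junk d v2) = y + h \<cdot>\<^sub>v b y + \<sigma> y *\<^sub>v v1 + F y *\<^sub>v v2"
      using square[OF y] y mult_mat_vec_trunc[of "\<sigma> y" d v1] mult_mat_vec_trunc[of "F y" d v2]
      by (intro eq_vecI) (auto simp: mat_vec_junk_def)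
  qed
qed

definition vec_pad :: "nat \<Rightarrow> real vec \<Rightarrow> real vec" where
  "vec_pad a v = vec a (\<lambda>i. if i < dim_vec v then v$i else 0)"

definition mat_pad :: "nat \<Rightarrow> nat \<Rightarrow> real mat \<Rightarrow> real mat" where
  "mat_pad R a W = mat R a (\<lambda>(i,j). if i < dim_row W \<and> j < dim_col W then W$$(i,j) else 0)"

lemma mat_pad_mult_vec_pad:
  assumes "W \<in> carrier_mat r k" "k \<le> a" "dim_vec z = k" "i < R"
  shows "(mat_pad R a W *\<^sub>v vec_pad a z) $ i = (if i < r then (W *\<^sub>v z) $ i else 0)"
proof -
  have "(mat_pad R a W *\<^sub>v vec_pad a z) $ i
      = (\<Sum>j\<in>{0..<a}. (if i < r \<and> j < k then W$$(i,j) else 0) * (if j < k then z$j else 0))"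
    using assms by (simp add: mat_pad_def vec_pad_def scalar_prod_def)
  also have "\<dots> = (\<Sum>j\<in>{0..<k}. (if i < r \<and> j < k then W$$(i,j) else 0) * (if j < k then z$j else 0))
     + (\<Sum>j\<in>{k..<a}. (if i < r \<and> j < k then W$$(i,j) else 0) * (if j < k then z$j else 0))"
    by (rule sum.atLeastLessThan_concat[symmetric]) (use assms in auto)
  also have "\<dots> = (\<Sum>j\<in>{0..<k}. (if i < r then W$$(i,j) * z$j else 0))"
    by (simp, rule sum.cong, auto)
  also have "\<dots> = (if i < r then (W *\<^sub>v z) $ i else 0)"
    using assms by (simp add: scalar_prod_def)
  finally show ?thesis .
qed

fun net_widen :: "nat \<Rightarrow> nat \<Rightarrow> net \<Rightarrow> net" where
  "net_widen N a [] = []"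
| "net_widen N a [(W,B)] = [(mat_pad (dim_row W) a W, B)]"
| "net_widen N a ((W,B)#l#L) = (mat_pad N a W, vec_pad N B) # net_widen N N (l#L)"

lemma wf_net_widen:
  "wf_net k \<Phi> b \<Longrightarrow> k \<le> a \<Longrightarrow> (\<forall>x\<in>set (butlast (layer_dims \<Phi>)). x \<le> N) \<Longrightarrow> 1 \<le> N \<Longrightarrow>
   wf_net a (net_widen N a \<Phi>) b \<and> length (net_widen N a \<Phi>) = length \<Phi> \<and>
   layer_dims (net_widen N a \<Phi>) = replicate (length \<Phi> - 1) N @ [b] \<and>
   (\<forall>z. dim_vec z = k \<longrightarrow> realize (net_widen N a \<Phi>) (vec_pad a z) = realize \<Phi> z)"
proof (induction N a \<Phi> arbitrary: k rule: net_widen.induct)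
  case (2 N a W B)
  have W: "W \<in> carrier_mat b k" "dim_vec B = b" "1 \<le> k" "1 \<le> b" using "2.prems" by auto
  have "mat_pad b a W *\<^sub>v vec_pad a z = W *\<^sub>v z" if z: "dim_vec z = k" for z
  proof (rule eq_vecI)
    fix i assume "i < dim_vec (W *\<^sub>v z)"
    then have i: "i < b" using W by simp
    show "(mat_pad b a W *\<^sub>v vec_pad a z) $ i = (W *\<^sub>v z) $ i"
      using mat_pad_mult_vec_pad[OF W(1) "2.prems"(2) z i] i by simp
  qed (use W in \<open>simp add: mat_pad_def\<close>)
  then show ?case using W "2.prems" by (auto simp: mat_pad_def)
next
  case (3 N a W B l L)
  have W: "W \<in> carrier_mat (dim_vec B) k" "1 \<le> k" "1 \<le> dim_vec B" "wf_net (dim_vec B) (l#L) b"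
    using "3.prems" by auto
  have BN: "dim_vec B \<le> N" "\<forall>x\<in>set (butlast (layer_dims (l#L))). x \<le> N"
    using "3.prems"(3) by (cases l; auto)+
  note IH = "3.IH"[OF W(4) BN(1) BN(2) "3.prems"(4)]
  obtain l' L' where lL: "net_widen N N (l#L) = l' # L'" using IH by (cases "net_widen N N (l#L)") auto
  have "relu (mat_pad N a W *\<^sub>v vec_pad a z + vec_pad N B) = vec_pad N (relu (W *\<^sub>v z + B))"
    if z: "dim_vec z = k" for z
  proof (rule eq_vecI)
    fix i assume "i < dim_vec (vec_pad N (relu (W *\<^sub>v z + B)))"
    then have i: "i < N" by (simp add: vec_pad_def)
    show "relu (mat_pad N a W *\<^sub>v vec_pad a z + vec_pad N B) $ i = vec_pad N (relu (W *\<^sub>v z + B)) $ i"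
      using mat_pad_mult_vec_pad[OF W(1) "3.prems"(2) z i] i W by (simp add: relu_def vec_pad_def mat_pad_def)
  qed (simp add: relu_def vec_pad_def mat_pad_def)
  then have "realize (net_widen N a ((W,B)#l#L)) (vec_pad a z) = realize ((W,B)#l#L) z"
    if "dim_vec z = k" for z
    using IH lL W that by (simp add: relu_def[symmetric])
  moreover have "wf_net a (net_widen N a ((W,B)#l#L)) b" using IH lL W "3.prems"(2) BN
    by (cases l') (auto simp: mat_pad_def vec_pad_def)
  ultimately show ?case using IH by (simp add: vec_pad_def)
qed auto

lemma realizable_imp_uniform_net:
  assumes "realizable a b L w h" "3 \<le> L" "1 \<le> w"
  shows "\<exists>\<Phi>. is_net \<Phi> \<and> arch \<Phi> = a # replicate (L - 2) (nat \<lfloor>w\<rfloor>) @ [b] \<and>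
     (\<forall>x. dim_vec x = a \<longrightarrow> realize \<Phi> x = h x)"
proof -
  obtain \<Phi> where \<Phi>: "wf_net a \<Phi> b" "length \<Phi> + 1 = L" "real (Max (set (a # layer_dims \<Phi>))) \<le> w"
      "\<forall>x. dim_vec x = a \<longrightarrow> realize \<Phi> x = h x"
    using assms(1) unfolding realizable_def by blast
  have N: "1 \<le> nat \<lfloor>w\<rfloor>" using assms(3) by linarith
  have "\<forall>x\<in>set (butlast (layer_dims \<Phi>)). x \<le> nat \<lfloor>w\<rfloor>"
  proof
    fix x assume "x \<in> set (butlast (layer_dims \<Phi>))"
    then have "x \<le> Max (set (a # layer_dims \<Phi>))" by (simp add: in_set_butlastD)
    then show "x \<le> nat \<lfloor>w\<rfloor>" using \<Phi>(3) by linarith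
  qed
  note widen = wf_net_widen[OF \<Phi>(1) le_refl this N]
  define \<Psi> where "\<Psi> = net_widen (nat \<lfloor>w\<rfloor>) a \<Phi>"
  have "arch \<Psi> = a # replicate (L - 2) (nat \<lfloor>w\<rfloor>) @ [b]"
    using widen \<Phi>(2) arch_wf_net[of a \<Psi> b] by (simp add: \<Psi>_def numeral_2_eq_2)
  moreover have "is_net \<Psi>" using widen \<Phi>(2) assms(2) by (intro wf_net_is_net[of a _ b]) (auto simp: \<Psi>_def)
  moreover have "\<forall>x. dim_vec x = a \<longrightarrow> realize \<Psi> x = h x"
  proof (intro allI impI)
    fix x :: "real vec" assume x: "dim_vec x = a"
    then have "vec_pad a x = x" by (intro eq_vecI) (auto simp: vec_pad_def)
    then show "realize \<Psi> x = h x" using widen \<Phi>(4) x by (metis \<Psi>_def)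
  qed
  ultimately show ?thesis by blast
qed

lemma uniform_nets_exist:
  assumes "\<And>i. i \<in> I \<Longrightarrow> realizable a b L w (h i)" "3 \<le> L" "1 \<le> w"
  shows "\<exists>\<Phi>. \<forall>i\<in>I. is_net (\<Phi> i) \<and> arch (\<Phi> i) = a # replicate (L - 2) (nat \<lfloor>w\<rfloor>) @ [b] \<and>
     (\<forall>x. dim_vec x = a \<longrightarrow> realize (\<Phi> i) x = h i x)"
  using realizable_imp_uniform_net[OF assms(1) assms(2,3)] by (intro bchoice) blast

lemma maxnorm_uniform_arch:
  assumes "real a \<le> w" "real b \<le> w" "1 \<le> w"
  shows "real (maxnorm (a # replicate k (nat \<lfloor>w\<rfloor>) @ [b])) \<le> w"
proof -
  have "real (nat \<lfloor>w\<rfloor>) \<le> w" using assms(3) by linarith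
  then show ?thesis unfolding maxnorm_def using assms by (intro real_Max_le) auto
qed

lemma sum_four_pow3: "(\<Sum>i<n. (4::real) * 3^i) = 2 * (3^n - 1)"
  by (induction n) (auto simp: algebra_simps)

lemma mlp_width_bound:
  fixes m c d :: real
  assumes m: "1 \<le> m" and c: "4 * d \<le> c" and d: "0 \<le> d"
  shows "m^(n+1) * (c + 2*d) + (2*d + (\<Sum>i<n. m^(n-i) * (c * (3*m)^(i+1) + c * (3*m)^i)))
     \<le> c * (3*m)^(n+1)"
proof -
  have c0: "0 \<le> c" using c d by linarith
  have mp: "1 \<le> m^(n+1)" using m by (rule one_le_power)
  have "m^(n-i) * (c * (3*m)^(i+1) + c * (3*m)^i) \<le> c * m^(n+1) * (4 * 3^i)" if i: "i < n" for i
  proof -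
    have "m^(n-i) * m^(i+1) = m^(n+1)" "m^(n-i) * m^i = m^n" using i by (simp_all flip: power_add)
    then have e: "m^(n-i) * (3*m)^(i+1) = 3^(i+1) * m^(n+1)" "m^(n-i) * (3*m)^i = 3^i * m^n"
      by (simp_all add: power_mult_distrib algebra_simps)
    have "m^(n-i) * (c * (3*m)^(i+1) + c * (3*m)^i) = c * (m^(n-i) * (3*m)^(i+1)) + c * (m^(n-i) * (3*m)^i)"
      by (simp only: algebra_simps)
    also have "\<dots> = c * (3^(i+1) * m^(n+1)) + c * (3^i * m^n)" by (simp only: e)
    also have "\<dots> \<le> c * (3^(i+1) * m^(n+1)) + c * (3^i * m^(n+1))"
      using m c0 by (simp add: mult_left_mono power_increasing)
    also have "\<dots> = c * m^(n+1) * (4 * 3^i)" by (simp add: algebra_simps)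
    finally show ?thesis .
  qed
  then have "(\<Sum>i<n. m^(n-i) * (c * (3*m)^(i+1) + c * (3*m)^i)) \<le> (\<Sum>i<n. c * m^(n+1) * (4 * 3^i))"
    by (intro sum_mono) auto
  also have "\<dots> = c * m^(n+1) * (\<Sum>i<n. 4 * 3^i)" by (simp only: sum_distrib_left)
  also have "\<dots> = c * m^(n+1) * (2 * (3^n - 1))" by (simp only: sum_four_pow3)
  finally have "m^(n+1) * (c + 2*d) + (2*d + (\<Sum>i<n. m^(n-i) * (c * (3*m)^(i+1) + c * (3*m)^i)))
      \<le> m^(n+1) * (c + 2*d) + 2 * d * m^(n+1) + c * m^(n+1) * (2 * (3^n - 1))"
    using mult_left_mono[OF mp, of "2 * d"] d by linarith
  also have "\<dots> = m^(n+1) * (4 * d - c + 2 * c * 3^n)" by (simp add: algebra_simps)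
  also have "\<dots> \<le> m^(n+1) * (3 * c * 3^n)" using c mp mult_nonneg_nonneg[OF c0, of "3^n"] by (intro mult_left_mono) auto
  also have "\<dots> = c * (3*m)^(n+1)" by (simp add: power_mult_distrib algebra_simps)
  finally show ?thesis .
qed

text \<open>\<open>U \<theta> (int n) t x\<close> and \<open>X \<theta> t x s\<close> stand for \<open>U^\<theta>_{n,m}(t, x)\<close> and \<open>X^{\<theta>,t,x}_s\<close> at
  the fixed sample point; \<open>E, Lf, Lg\<close> and \<open>PX, wf, wg\<close> are depths and width bounds of networks
  for the Euler scheme, \<open>f\<close> and \<open>g\<close>.\<close>
locale mlp_scheme =
  fixes T :: real and m d :: nat and tt :: "int list \<Rightarrow> real"
    and X :: "int list \<Rightarrow> real \<Rightarrow> real vec \<Rightarrow> real \<Rightarrow> real vec"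
    and f :: "real \<Rightarrow> real" and g :: "real vec \<Rightarrow> real"
    and U :: "int list \<Rightarrow> int \<Rightarrow> real \<Rightarrow> real vec \<Rightarrow> real"
    and E Lf Lg :: nat and PX wf wg c :: real
  assumes T: "0 \<le> T" and m: "1 \<le> m"
    and tt_range: "\<And>\<theta>. \<theta> \<noteq> [] \<Longrightarrow> tt \<theta> \<in> {0..1}"
    and X_realizable: "\<And>\<theta> t s. \<theta> \<noteq> [] \<Longrightarrow> t \<in> {0..T} \<Longrightarrow> s \<in> {t..T} \<Longrightarrow>
      realizable d d E PX (\<lambda>x. X \<theta> t x s)"
    and f_realizable: "realizable 1 1 Lf wf (\<lambda>v. vec1 (f (v $ 0)))"
    and g_realizable: "realizable d 1 Lg wg (\<lambda>x. vec1 (g x))"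
    and widths: "PX \<le> c + 2 * real d" "wf \<le> c" "wg \<le> c" "4 * real d \<le> c"
    and U_rec: "\<And>\<theta> n t x. \<theta> \<noteq> [] \<Longrightarrow> t \<in> {0..T} \<Longrightarrow> dim_vec x = d \<Longrightarrow>
      U \<theta> (int n) t x =
        (if 1 \<le> n then 1 else 0) / real m ^ n * (\<Sum>i\<in>{1..m^n}. g (X (\<theta> @ [0, - int i]) t x T))
        + (\<Sum>l<n. (T - t) / real m ^ (n - l) *
            (\<Sum>i\<in>{1..m^(n-l)}.
              (let \<eta> = \<theta> @ [int l, int i]; s = t + (T - t) * tt \<eta>; y = X \<eta> t x s in
                f (U \<eta> (int l) s y) - (if 1 \<le> l then 1 else 0) * f (U (\<theta> @ [- int l, int i]) (int l - 1) s y))))"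
begin

definition depth :: "nat \<Rightarrow> nat" where
  "depth k = (k + 1) * E + k * (Lf - 2) + Lg - 1"

definition width :: "nat \<Rightarrow> real" where
  "width k = c * (3 * real m) ^ k"

definition summand :: "int list \<Rightarrow> real \<Rightarrow> nat \<Rightarrow> nat \<Rightarrow> real vec \<Rightarrow> real" where
  "summand \<theta> t l i x = (let \<eta> = \<theta> @ [int l, int i]; s = t + (T - t) * tt \<eta>; y = X \<eta> t x s in
     f (U \<eta> (int l) s y) - (if 1 \<le> l then 1 else 0) * f (U (\<theta> @ [- int l, int i]) (int l - 1) s y))"

lemma U_rec_summand:
  "\<theta> \<noteq> [] \<Longrightarrow> t \<in> {0..T} \<Longrightarrow> dim_vec x = d \<Longrightarrow>
   U \<theta> (int n) t x =
     (if 1 \<le> n then 1 else 0) / real m ^ n * (\<Sum>i\<in>{1..m^n}. g (X (\<theta> @ [0, - int i]) t x T))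
     + (\<Sum>l<n. (T - t) / real m ^ (n - l) * (\<Sum>i\<in>{1..m^(n-l)}. summand \<theta> t l i x))"
  unfolding summand_def by (rule U_rec)

lemma U_level_0: "\<theta> \<noteq> [] \<Longrightarrow> t \<in> {0..T} \<Longrightarrow> dim_vec x = d \<Longrightarrow> U \<theta> 0 t x = 0"
  using U_rec[of \<theta> t x 0] by simp

lemma sample_time_mem: "\<theta> \<noteq> [] \<Longrightarrow> t \<in> {0..T} \<Longrightarrow> t + (T - t) * tt \<theta> \<in> {t..T}"
  using tt_range[of \<theta>] mult_left_le[of "tt \<theta>" "T - t"] by auto

lemma dim_X: "\<theta> \<noteq> [] \<Longrightarrow> t \<in> {0..T} \<Longrightarrow> s \<in> {t..T} \<Longrightarrow> dim_vec x = d \<Longrightarrow> dim_vec (X \<theta> t x s) = d"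
  using realizable_dim_vec[OF X_realizable] by blast

lemma params_ge: "1 \<le> d" "2 \<le> E" "2 \<le> Lf" "2 \<le> Lg" "4 \<le> c"
  using realizable_dims[OF X_realizable[of "[0]" 0 0]] realizable_dims[OF f_realizable]
    realizable_dims[OF g_realizable] widths(4) T by auto

lemma depth_ge: "E + Lg - 2 \<le> depth k"
  using params_ge by (simp add: depth_def)

lemma three_le_depth: "3 \<le> depth k"
  using params_ge by (simp add: depth_def)

lemma int_depth: "int (depth k) = (int k + 1) * int E + int k * (int Lf - 2) + int Lg - 1"
proof -
  have Lf: "int (Lf - 2) = int Lf - 2" using params_ge by (simp add: of_nat_diff)
  have "1 \<le> (k + 1) * E + k * (Lf - 2) + Lg" using params_ge by simp
  then have "int (depth k) = int ((k + 1) * E + k * (Lf - 2) + Lg) - 1"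
    unfolding depth_def by (metis of_nat_1 of_nat_diff)
  then show ?thesis by (simp only: of_nat_add of_nat_mult of_nat_1 Lf)
qed

lemma depth_nested: "l < k \<Longrightarrow> E + depth l - 2 + Lf - 2 \<le> depth k"
proof -
  assume "l < k"
  then have "(l + 2) * E \<le> (k + 1) * E" "(l + 1) * (Lf - 2) \<le> k * (Lf - 2)"
    by (intro mult_le_mono1; simp)+
  moreover have "(l + 2) * E = (l + 1) * E + E" "(l + 1) * (Lf - 2) = l * (Lf - 2) + (Lf - 2)"
    by (simp_all add: add_mult_distrib)
  ultimately show ?thesis using params_ge unfolding depth_def by linarith
qed

lemma width_ge: "1 \<le> l \<Longrightarrow> 3 * c \<le> width l"
proof -
  assume "1 \<le> l"
  then have "(3 * real m) ^ 1 \<le> (3 * real m) ^ l" using m by (intro power_increasing) auto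
  then have "3 \<le> (3 * real m) ^ l" using m by simp
  then have "c * 3 \<le> c * (3 * real m) ^ l" using params_ge by (intro mult_left_mono) auto
  then show ?thesis unfolding width_def by linarith
qed

lemma c_le_width: "c \<le> width k"
proof -
  have "1 \<le> (3 * real m) ^ k" using m by (intro one_le_power) simp
  then have "c * 1 \<le> c * (3 * real m) ^ k" using params_ge by (intro mult_left_mono) auto
  then show ?thesis by (simp add: width_def)
qed

lemma realizable_constant: "realizable d 1 (depth k) (2 * real d) (\<lambda>_. vec1 y)"
proof (rule realizable_mono)
  show "realizable d 1 (depth k) (max (real d) 2) (\<lambda>_. vec1 y)"
    by (rule realizable_const) (use params_ge depth_ge[of k] in auto)
qed (use params_ge in auto)

lemma realizable_terminal_term:
  assumes "\<theta> \<noteq> []" "t \<in> {0..T}"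
  shows "realizable d 1 (depth k) (real (m^k) * (c + 2 * real d))
    (\<lambda>x. vec1 ((if 1 \<le> k then 1 else 0) / real m ^ k * (\<Sum>i\<in>{1..m^k}. g (X (\<theta> @ [0, - int i]) t x T)) + 0))"
proof -
  have "realizable d 1 (depth k) (c + 2 * real d) (\<lambda>x. vec1 (g (X (\<theta> @ [0, - int i]) t x T)))" for i
  proof -
    have "realizable d 1 (E + Lg - 2) (max PX wg) (\<lambda>x. vec1 (g (X (\<theta> @ [0, - int i]) t x T)))"
      by (rule realizable_comp[OF X_realizable g_realizable]) (use assms in auto)
    from realizable_deepen_after[OF this depth_ge] show ?thesis
      by (rule realizable_mono) (use widths params_ge in auto)
  qed
  then have "realizable d 1 (depth k) (\<Sum>i\<in>{1..m^k}. c + 2 * real d)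
      (\<lambda>x. vec1 (\<Sum>i\<in>{1..m^k}. g (X (\<theta> @ [0, - int i]) t x T)))"
    using m by (intro realizable_scalar_sum) auto
  then show ?thesis by (intro realizable_scalar_affine) simp
qed

lemma realizable_nested_term:
  assumes IH: "\<And>\<eta> s. \<eta> \<noteq> [] \<Longrightarrow> s \<in> {0..T} \<Longrightarrow>
      realizable d 1 (depth l) (width l) (\<lambda>y. vec1 (U \<eta> (int l) s y))"
    and l: "1 \<le> l" "l < k" and \<eta>: "\<eta> \<noteq> []" "\<eta>' \<noteq> []" and t: "t \<in> {0..T}" and s: "s \<in> {t..T}"
  shows "realizable d 1 (depth k) (width l) (\<lambda>x. vec1 (f (U \<eta>' (int l) s (X \<eta> t x s))))"
proof -
  have "realizable d d E PX (\<lambda>x. X \<eta> t x s)" using X_realizable \<eta> t s by blast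
  moreover have "realizable d 1 (depth l) (width l) (\<lambda>y. vec1 (U \<eta>' (int l) s y))" using IH \<eta> t s by auto
  ultimately have "realizable d 1 (E + depth l - 2 + Lf - 2) (max (max PX (width l)) wf)
      (\<lambda>x. vec1 (f (vec1 (U \<eta>' (int l) s (X \<eta> t x s)) $ 0)))"
    by (rule realizable_comp[OF realizable_comp f_realizable])
  from realizable_deepen_after[OF this depth_nested[OF l(2)]] show ?thesis
    by (rule realizable_cong[OF realizable_mono]) (use width_ge[OF l(1)] widths params_ge in auto)
qed

lemma realizable_summand:
  assumes IH: "\<And>j \<eta> s. j < k \<Longrightarrow> \<eta> \<noteq> [] \<Longrightarrow> s \<in> {0..T} \<Longrightarrow>
      realizable d 1 (depth j) (width j) (\<lambda>y. vec1 (U \<eta> (int j) s y))"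
    and l: "1 \<le> l" "l < k" and \<theta>: "\<theta> \<noteq> []" and t: "t \<in> {0..T}"
  shows "realizable d 1 (depth k) (width l + width (l - 1)) (\<lambda>x. vec1 (summand \<theta> t l i x))"
proof -
  define \<eta> \<eta>' s where "\<eta> = \<theta> @ [int l, int i]" and "\<eta>' = \<theta> @ [- int l, int i]"
    and "s = t + (T - t) * tt \<eta>"
  have \<eta>: "\<eta> \<noteq> []" "\<eta>' \<noteq> []" and s: "s \<in> {t..T}"
    using sample_time_mem[OF _ t] by (auto simp: \<eta>_def \<eta>'_def s_def)
  have summand: "summand \<theta> t l i x = f (U \<eta> (int l) s (X \<eta> t x s)) - f (U \<eta>' (int (l - 1)) s (X \<eta> t x s))"
    for x unfolding summand_def \<eta>_def \<eta>'_def s_def Let_def using l by (simp add: of_nat_diff)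
  have A: "realizable d 1 (depth k) (width l) (\<lambda>x. vec1 (f (U \<eta> (int l) s (X \<eta> t x s))))"
    by (rule realizable_nested_term[OF IH[OF l(2)] l \<eta>(1) \<eta>(1) t s])
  show ?thesis
  proof (cases "l = 1")
    case True
    have U0: "U \<eta>' (int (l - 1)) s (X \<eta> t x s) = 0" if "dim_vec x = d" for x
      using U_level_0 dim_X \<eta> t s that True by auto
    have "0 \<le> width 0" using params_ge by (simp add: width_def)
    then have "realizable d 1 (depth k) (width l + width (l - 1))
        (\<lambda>x. vec1 (1 * f (U \<eta> (int l) s (X \<eta> t x s)) + - f 0))"
      by (intro realizable_mono[OF realizable_scalar_affine[OF A]]) (simp add: True)
    then show ?thesis by (rule realizable_cong) (use U0 in \<open>simp add: summand\<close>)
  next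
    case False
    then have "1 \<le> l - 1" "l - 1 < k" using l by auto
    then have B: "realizable d 1 (depth k) (width (l - 1)) (\<lambda>x. vec1 (f (U \<eta>' (int (l - 1)) s (X \<eta> t x s))))"
      using realizable_nested_term[OF IH[OF \<open>l - 1 < k\<close>] _ _ \<eta>(1) \<eta>(2) t s] by blast
    from realizable_scalar_lincomb[OF A B, of 1 "-1"] show ?thesis
      by (rule realizable_cong) (simp add: summand)
  qed
qed

lemma realizable_level_term:
  assumes IH: "\<And>j \<eta> s. j < k \<Longrightarrow> \<eta> \<noteq> [] \<Longrightarrow> s \<in> {0..T} \<Longrightarrow>
      realizable d 1 (depth j) (width j) (\<lambda>y. vec1 (U \<eta> (int j) s y))"
    and l: "l < k" and \<theta>: "\<theta> \<noteq> []" and t: "t \<in> {0..T}"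
  shows "realizable d 1 (depth k) (if l = 0 then 2 * real d else real m ^ (k - l) * (width l + width (l - 1)))
     (\<lambda>x. vec1 ((T - t) / real m ^ (k - l) * (\<Sum>i\<in>{1..m^(k-l)}. summand \<theta> t l i x)))"
proof (cases "l = 0")
  case True
  have summand0: "summand \<theta> t 0 i x = f 0" if "dim_vec x = d" for i x
    using U_level_0 dim_X sample_time_mem \<theta> t that by (simp add: summand_def Let_def)
  have "realizable d 1 (depth k) (2 * real d)
      (\<lambda>x. vec1 ((T - t) / real m ^ k * (\<Sum>i\<in>{1..m^k}. summand \<theta> t 0 i x)))"
    by (rule realizable_cong[OF realizable_constant[of k "(T - t) / real m ^ k * (real (m ^ k) * f 0)"]])
      (simp add: summand0)
  then show ?thesis using True by simp
next
  case False
  have "realizable d 1 (depth k) (\<Sum>i\<in>{1..m^(k-l)}. width l + width (l - 1))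
      (\<lambda>x. vec1 (\<Sum>i\<in>{1..m^(k-l)}. summand \<theta> t l i x))"
    using realizable_summand[OF IH] False l \<theta> t m by (intro realizable_scalar_sum) auto
  from realizable_scalar_affine[OF this, of "(T - t) / real m ^ (k - l)" 0] show ?thesis
    using False by simp
qed

lemma realizable_U:
  "\<theta> \<noteq> [] \<Longrightarrow> t \<in> {0..T} \<Longrightarrow> realizable d 1 (depth k) (width k) (\<lambda>x. vec1 (U \<theta> (int k) t x))"
proof (induction k arbitrary: \<theta> t rule: less_induct)
  case (less k)
  show ?case
  proof (cases k)
    case 0
    have "2 * real d \<le> width 0" using widths(4) by (simp add: width_def)
    then have "realizable d 1 (depth 0) (width 0) (\<lambda>_. vec1 0)" by (rule realizable_mono[OF realizable_constant])
    then show ?thesis unfolding 0 by (rule realizable_cong) (simp add: U_level_0[OF less.prems])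
  next
    case (Suc n)
    define w where "w l = (if l = 0 then 2 * real d else real m ^ (k - l) * (width l + width (l - 1)))" for l
    have "realizable d 1 (depth k) (w l)
        (\<lambda>x. vec1 ((T - t) / real m ^ (k - l) * (\<Sum>i\<in>{1..m^(k-l)}. summand \<theta> t l i x)))" if "l < k" for l
      unfolding w_def by (rule realizable_level_term[OF _ that less.prems]) (fact less.IH)
    then have "realizable d 1 (depth k) (\<Sum>l<k. w l)
        (\<lambda>x. vec1 (\<Sum>l<k. (T - t) / real m ^ (k - l) * (\<Sum>i\<in>{1..m^(k-l)}. summand \<theta> t l i x)))"
      using Suc by (intro realizable_scalar_sum) auto
    from realizable_scalar_lincomb[OF realizable_terminal_term[OF less.prems] this, of 1 1]
    have U: "realizable d 1 (depth k) (real (m^k) * (c + 2 * real d) + (\<Sum>l<k. w l))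
        (\<lambda>x. vec1 (U \<theta> (int k) t x))"
      by (rule realizable_cong) (simp add: U_rec_summand[OF less.prems])
    have "real (m^k) * (c + 2 * real d) + (\<Sum>l<k. w l) = real m ^ (n + 1) * (c + 2 * real d)
        + (2 * real d + (\<Sum>i<n. real m ^ (n - i) * (c * (3 * real m) ^ (i + 1) + c * (3 * real m) ^ i)))"
      unfolding Suc sum.lessThan_Suc_shift by (simp add: w_def width_def Suc)
    also have "\<dots> \<le> width k" unfolding width_def Suc Suc_eq_plus1
      by (rule mlp_width_bound) (use m widths(4) in auto)
    finally show ?thesis by (rule realizable_mono[OF U])
  qed
qed

lemma uniform_mlp_nets:
  "\<exists>\<Psi>. \<forall>t\<in>{0..T}. \<forall>\<theta>. \<theta> \<noteq> [] \<longrightarrow> is_net (\<Psi> t \<theta>) \<and>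
     arch (\<Psi> t \<theta>) = d # replicate (depth k - 2) (nat \<lfloor>width k\<rfloor>) @ [1] \<and>
     (\<forall>x. dim_vec x = d \<longrightarrow> realize (\<Psi> t \<theta>) x = vec1 (U \<theta> (int k) t x))"
proof -
  have "1 \<le> width k" using c_le_width[of k] params_ge by linarith
  then have "\<exists>\<Psi>. \<forall>i \<in> {0..T} \<times> {\<theta>. \<theta> \<noteq> []}. is_net (\<Psi> i) \<and>
      arch (\<Psi> i) = d # replicate (depth k - 2) (nat \<lfloor>width k\<rfloor>) @ [1] \<and>
      (\<forall>x. dim_vec x = d \<longrightarrow> realize (\<Psi> i) x = vec1 (U (snd i) (int k) (fst i) x))"
    using realizable_U three_le_depth by (intro uniform_nets_exist) auto
  then obtain \<Psi> where "\<forall>i \<in> {0..T} \<times> {\<theta>. \<theta> \<noteq> []}. is_net (\<Psi> i) \<and>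
      arch (\<Psi> i) = d # replicate (depth k - 2) (nat \<lfloor>width k\<rfloor>) @ [1] \<and>
      (\<forall>x. dim_vec x = d \<longrightarrow> realize (\<Psi> i) x = vec1 (U (snd i) (int k) (fst i) x))"
    by blast
  then show ?thesis by (intro exI[of _ "\<lambda>t \<theta>. \<Psi> (t, \<theta>)"]) auto
qed

lemma uniform_arch_bounds:
  "length (d # replicate (depth k - 2) (nat \<lfloor>width k\<rfloor>) @ [1]) = depth k"
  "real (maxnorm (d # replicate (depth k - 2) (nat \<lfloor>width k\<rfloor>) @ [1])) \<le> width k"
  using three_le_depth[of k] c_le_width[of k] widths(4) params_ge
  by (auto intro!: maxnorm_uniform_arch)

end

lemma realizable_euler_scheme:
  fixes X :: "real vec \<Rightarrow> real \<Rightarrow> real vec" and b :: "real vec \<Rightarrow> real vec"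
    and \<sigma> F :: "real vec \<Rightarrow> real mat" and V Z :: "real \<Rightarrow> real vec"
  assumes T: "0 < T" and K: "1 \<le> K"
    and b: "realizable d d Lb wb b"
    and \<sigma>: "\<And>v. dim_vec v = d \<Longrightarrow> realizable d d L\<sigma> w\<sigma> (\<lambda>x. \<sigma> x *\<^sub>v v)"
    and F: "\<And>v. dim_vec v = d \<Longrightarrow> realizable d d LF wF (\<lambda>x. F x *\<^sub>v v)"
    and square: "\<And>x. dim_vec x = d \<Longrightarrow> \<sigma> x \<in> carrier_mat d d \<and> F x \<in> carrier_mat d d"
    and M: "3 \<le> M" "Lb \<le> M" "L\<sigma> \<le> M" "LF \<le> M"
    and X_euler: "\<And>x. dim_vec x = d \<Longrightarrow> X x t = x \<and>
      (\<forall>s\<in>{t<..T}. let a = max t (flrK T K s) in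
         X x s = X x a + (s - a) \<cdot>\<^sub>v b (X x a) + \<sigma> (X x a) *\<^sub>v (V s - V a) + F (X x a) *\<^sub>v (Z s - Z a))"
    and t: "t \<in> {0..T}" and s: "s \<in> {t..T}"
  shows "realizable d d (K * (M - 1) + 1)
    (2 * real d + max wb (2 * real d) + max w\<sigma> (2 * real d) + max wF (2 * real d)) (\<lambda>x. X x s)"
proof (rule realizable_euler[where step = "\<lambda>s a y. y + (s - a) \<cdot>\<^sub>v b y + \<sigma> y *\<^sub>v (V s - V a) + F y *\<^sub>v (Z s - Z a)"])
  show "realizable d d M (2 * real d + max wb (2 * real d) + max w\<sigma> (2 * real d) + max wF (2 * real d))
      (\<lambda>y. y + (s' - a) \<cdot>\<^sub>v b y + \<sigma> y *\<^sub>v (V s' - V a) + F y *\<^sub>v (Z s' - Z a))" for s' a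
    by (rule realizable_euler_step[OF b \<sigma> F square M])
  show "2 * real d \<le> 2 * real d + max wb (2 * real d) + max w\<sigma> (2 * real d) + max wF (2 * real d)"
    by (simp add: le_max_iff_disj)
qed (use X_euler T K M t s in \<open>auto simp: Let_def\<close>)

lemma realizable_of_net_family:
  assumes "\<And>v. dim_vec v = d \<Longrightarrow> is_net (\<Phi> v) \<and> hd (arch (\<Phi> v)) = d \<and> last (arch (\<Phi> v)) = d \<and>
      (\<forall>x. dim_vec x = d \<longrightarrow> realize (\<Phi> v) x = A x *\<^sub>v v) \<and> arch (\<Phi> v) = arch (\<Phi> (0\<^sub>v d))"
    and "dim_vec v = d"
  shows "realizable d d (length (arch (\<Phi> (0\<^sub>v d)))) (real (maxnorm (arch (\<Phi> (0\<^sub>v d))))) (\<lambda>x. A x *\<^sub>v v)"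
  using realizable_of_net[of "\<Phi> v" d d] assms by metis

lemma vec1_index_0: "dim_vec x = 1 \<Longrightarrow> vec1 (x $ 0) = x"
  by (rule eq_vecI) auto

theorem proposition5p12:
  fixes T c :: real and f :: "real \<Rightarrow> real"
    and \<beta> :: "nat \<Rightarrow> real vec \<Rightarrow> real vec" and \<sigma> :: "nat \<Rightarrow> real vec \<Rightarrow> real mat"
    and \<gamma> :: "nat \<Rightarrow> real vec \<Rightarrow> real vec \<Rightarrow> real vec" and g :: "nat \<Rightarrow> real vec \<Rightarrow> real"
    and \<nu> :: "nat \<Rightarrow> real vec measure"
    and \<beta>e :: "nat \<Rightarrow> real \<Rightarrow> real vec \<Rightarrow> real vec" and \<sigma>e :: "nat \<Rightarrow> real \<Rightarrow> real vec \<Rightarrow> real mat"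
    and \<gamma>e :: "nat \<Rightarrow> real \<Rightarrow> real vec \<Rightarrow> real vec \<Rightarrow> real vec"
    and ge :: "nat \<Rightarrow> real \<Rightarrow> real vec \<Rightarrow> real"
    and Fe :: "nat \<Rightarrow> real \<Rightarrow> real vec \<Rightarrow> real mat" and G :: "nat \<Rightarrow> real vec \<Rightarrow> real vec"
    and \<Phi>\<beta> :: "nat \<Rightarrow> real \<Rightarrow> net" and \<Phi>\<sigma> :: "nat \<Rightarrow> real \<Rightarrow> real vec \<Rightarrow> net"
    and \<Phi>F :: "nat \<Rightarrow> real \<Rightarrow> real vec \<Rightarrow> net"
    and K :: nat
    and tt :: "int list \<Rightarrow> real"
    and W :: "nat \<Rightarrow> int list \<Rightarrow> real \<Rightarrow> real vec"
    and J :: "nat \<Rightarrow> int list \<Rightarrow> real \<Rightarrow> real vec"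
    and X :: "nat \<Rightarrow> int list \<Rightarrow> real \<Rightarrow> real \<Rightarrow> real vec \<Rightarrow> real \<Rightarrow> real vec"
    and fe :: "real \<Rightarrow> real \<Rightarrow> real" and \<Phi>f :: "real \<Rightarrow> net" and \<Phi>g :: "nat \<Rightarrow> real \<Rightarrow> net"
    and U :: "nat \<Rightarrow> real \<Rightarrow> int list \<Rightarrow> int \<Rightarrow> int \<Rightarrow> real \<Rightarrow> real vec \<Rightarrow> real"
    and cc :: "nat \<Rightarrow> real \<Rightarrow> real"
  assumes T_pos: "0 < T" and c_ge: "2 \<le> c" and f_cont: "continuous_on UNIV f"
    (* typing of the coefficient functions *)
    and dims: "\<And>d x z. 1 \<le> d \<Longrightarrow> dim_vec x = d \<Longrightarrow> dim_vec z = d \<Longrightarrow>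
         dim_vec (\<beta> d x) = d \<and> \<sigma> d x \<in> carrier_mat d d \<and> dim_vec (\<gamma> d x z) = d"
    and dims_e: "\<And>d e x z. 1 \<le> d \<Longrightarrow> 0 < e \<Longrightarrow> e < 1 \<Longrightarrow> dim_vec x = d \<Longrightarrow> dim_vec z = d \<Longrightarrow>
         dim_vec (\<beta>e d e x) = d \<and> \<sigma>e d e x \<in> carrier_mat d d \<and> dim_vec (\<gamma>e d e x z) = d
         \<and> Fe d e x \<in> carrier_mat d d \<and> dim_vec (G d z) = d"
    and \<gamma>_cont: "\<And>d. 1 \<le> d \<Longrightarrow> vcont2 d (\<gamma> d)"
    and \<nu>_levy: "\<And>d. 1 \<le> d \<Longrightarrow> levy_measure d (\<nu> d)"
    (* (A1) *)
    and A1: "\<And>d. 1 \<le> d \<Longrightarrow> \<exists>C. \<forall>x y z. dim_vec x = d \<longrightarrow> dim_vec y = d \<longrightarrow> dim_vec z = d \<longrightarrow>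
         vnorm2 (\<gamma> d x z) \<le> C * min 1 (vnorm2 z) \<and>
         vnorm2 (\<gamma> d x z - \<gamma> d y z) \<le> C * vnorm2 (x - y) * min 1 (vnorm2 z)"
    (* (A2) *)
    and A2: "\<And>d. 1 \<le> d \<Longrightarrow> \<exists>lam>0. \<forall>x z. dim_vec x = d \<longrightarrow> dim_vec z = d \<longrightarrow>
         (\<exists>Jm. vec_has_jacobian d (\<lambda>y. \<gamma> d y z) x Jm \<and>
            (\<forall>\<delta>\<in>{0..1}. lam \<le> \<bar>det (1\<^sub>m d + \<delta> \<cdot>\<^sub>m Jm)\<bar>))"
    (* (A3) *)
    and A3_lip: "\<And>d x y. 1 \<le> d \<Longrightarrow> dim_vec x = d \<Longrightarrow> dim_vec y = d \<Longrightarrow>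
         ennreal (vnorm2 (\<beta> d x - \<beta> d y) + frob2 (\<sigma> d x - \<sigma> d y))
           + (\<integral>\<^sup>+ z. ennreal (vnorm2 (\<gamma> d x z - \<gamma> d y z)) \<partial>\<nu> d)
         \<le> ennreal (c * vnorm2 (x - y))"
    and A3_f: "\<And>w1 w2. (f w1 - f w2)^2 \<le> c * (w1 - w2)^2"
    and A3_g: "\<And>d x y. 1 \<le> d \<Longrightarrow> dim_vec x = d \<Longrightarrow> dim_vec y = d \<Longrightarrow>
         (g d x - g d y)^2 \<le> c * real d powr c / T * vnorm2 (x - y)"
    and A3_0: "\<And>d. 1 \<le> d \<Longrightarrow>
         ennreal (vnorm2 (\<beta> d (0\<^sub>v d)) + frob2 (\<sigma> d (0\<^sub>v d)))
           + (\<integral>\<^sup>+ z. ennreal (vnorm2 (\<gamma> d (0\<^sub>v d) z)) \<partial>\<nu> d)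
           + ennreal (T^3 * (\<bar>f 0\<bar> + 1)^2 + T * (g d (0\<^sub>v d))^2)
         \<le> ennreal (c * real d powr c)"
    (* (B1) *)
    and \<gamma>e_cont: "\<And>d e. 1 \<le> d \<Longrightarrow> 0 < e \<Longrightarrow> e < 1 \<Longrightarrow> vcont2 d (\<gamma>e d e)"
    and B1: "\<And>d e. 1 \<le> d \<Longrightarrow> 0 < e \<Longrightarrow> e < 1 \<Longrightarrow>
         \<exists>C. \<forall>x y z. dim_vec x = d \<longrightarrow> dim_vec y = d \<longrightarrow> dim_vec z = d \<longrightarrow>
         vnorm2 (\<gamma>e d e x z) \<le> C * min 1 (vnorm2 z) \<and>
         vnorm2 (\<gamma>e d e x z - \<gamma>e d e y z) \<le> C * vnorm2 (x - y) * min 1 (vnorm2 z)"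
    (* (B2) *)
    and B2_lip: "\<And>d e x y. 1 \<le> d \<Longrightarrow> 0 < e \<Longrightarrow> e < 1 \<Longrightarrow> dim_vec x = d \<Longrightarrow> dim_vec y = d \<Longrightarrow>
         ennreal (vnorm2 (\<beta>e d e x - \<beta>e d e y) + frob2 (\<sigma>e d e x - \<sigma>e d e y))
           + (\<integral>\<^sup>+ z. ennreal (vnorm2 (\<gamma>e d e x z - \<gamma>e d e y z)) \<partial>\<nu> d)
         \<le> ennreal (c * vnorm2 (x - y))"
    and B2_g: "\<And>d e x y. 1 \<le> d \<Longrightarrow> 0 < e \<Longrightarrow> e < 1 \<Longrightarrow> dim_vec x = d \<Longrightarrow> dim_vec y = d \<Longrightarrow>
         (ge d e x - ge d e y)^2 \<le> c * real d powr c / T * vnorm2 (x - y)"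
    and B2_0: "\<And>d e. 1 \<le> d \<Longrightarrow> 0 < e \<Longrightarrow> e < 1 \<Longrightarrow>
         ennreal (vnorm2 (\<beta>e d e (0\<^sub>v d)) + frob2 (\<sigma>e d e (0\<^sub>v d)))
           + (\<integral>\<^sup>+ z. ennreal (vnorm2 (\<gamma>e d e (0\<^sub>v d) z)) \<partial>\<nu> d)
           + ennreal (T * (ge d e (0\<^sub>v d))^2)
         \<le> ennreal (c * real d powr c)"
    and B2_approx: "\<And>d e x. 1 \<le> d \<Longrightarrow> 0 < e \<Longrightarrow> e < 1 \<Longrightarrow> dim_vec x = d \<Longrightarrow>
         ennreal (vnorm2 (\<beta>e d e x - \<beta> d x) + frob2 (\<sigma>e d e x - \<sigma> d x))
           + (\<integral>\<^sup>+ z. ennreal (vnorm2 (\<gamma>e d e x z - \<gamma> d x z)) \<partial>\<nu> d)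
           + ennreal ((ge d e x - g d x)^2)
         \<le> ennreal (e * c * real d powr c * (real d powr c + vnorm2 x))"
    (* factorisation of the jump coefficient and measurability of F, G *)
    and \<gamma>e_fact: "\<And>d e y z. 1 \<le> d \<Longrightarrow> 0 < e \<Longrightarrow> e < 1 \<Longrightarrow> dim_vec y = d \<Longrightarrow> dim_vec z = d \<Longrightarrow>
         \<gamma>e d e y z = Fe d e y *\<^sub>v G d z"
    and Fe_meas: "\<And>d e i j. 1 \<le> d \<Longrightarrow> 0 < e \<Longrightarrow> e < 1 \<Longrightarrow> i < d \<Longrightarrow> j < d \<Longrightarrow>
         (\<lambda>y. Fe d e y $$ (i,j)) \<in> borel_measurable (vec_borel d)"
    and G_meas: "\<And>d i. 1 \<le> d \<Longrightarrow> i < d \<Longrightarrow> (\<lambda>z. G d z $ i) \<in> borel_measurable (vec_borel d)"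
    (* network representations of the coefficients *)
    and \<Phi>\<beta>_net: "\<And>d e. 1 \<le> d \<Longrightarrow> 0 < e \<Longrightarrow> e < 1 \<Longrightarrow>
         is_net (\<Phi>\<beta> d e) \<and> hd (arch (\<Phi>\<beta> d e)) = d \<and> last (arch (\<Phi>\<beta> d e)) = d \<and>
         (\<forall>x. dim_vec x = d \<longrightarrow> realize (\<Phi>\<beta> d e) x = \<beta>e d e x)"
    and \<Phi>\<sigma>_net: "\<And>d e v. 1 \<le> d \<Longrightarrow> 0 < e \<Longrightarrow> e < 1 \<Longrightarrow> dim_vec v = d \<Longrightarrow>
         is_net (\<Phi>\<sigma> d e v) \<and> hd (arch (\<Phi>\<sigma> d e v)) = d \<and> last (arch (\<Phi>\<sigma> d e v)) = d \<and>
         (\<forall>x. dim_vec x = d \<longrightarrow> realize (\<Phi>\<sigma> d e v) x = \<sigma>e d e x *\<^sub>v v) \<and>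
         arch (\<Phi>\<sigma> d e v) = arch (\<Phi>\<sigma> d e (0\<^sub>v d))"
    and \<Phi>F_net: "\<And>d e v. 1 \<le> d \<Longrightarrow> 0 < e \<Longrightarrow> e < 1 \<Longrightarrow> dim_vec v = d \<Longrightarrow>
         is_net (\<Phi>F d e v) \<and> hd (arch (\<Phi>F d e v)) = d \<and> last (arch (\<Phi>F d e v)) = d \<and>
         (\<forall>x. dim_vec x = d \<longrightarrow> realize (\<Phi>F d e v) x = Fe d e x *\<^sub>v v) \<and>
         arch (\<Phi>F d e v) = arch (\<Phi>F d e (0\<^sub>v d))"
    (* realisations at the fixed sample point omega *)
    and K_pos: "1 \<le> K"
    and tt_range: "\<And>\<theta>. \<theta> \<noteq> [] \<Longrightarrow> tt \<theta> \<in> {0..1}"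
    and X_euler: "\<And>d \<theta> e t x. 1 \<le> d \<Longrightarrow> \<theta> \<noteq> [] \<Longrightarrow> 0 < e \<Longrightarrow> e < 1 \<Longrightarrow>
         t \<in> {0..T} \<Longrightarrow> dim_vec x = d \<Longrightarrow>
         X d \<theta> e t x t = x \<and>
         (\<forall>s\<in>{t<..T}. let a = max t (flrK T K s) in
            X d \<theta> e t x s = X d \<theta> e t x a + (s - a) \<cdot>\<^sub>v \<beta>e d e (X d \<theta> e t x a)
              + \<sigma>e d e (X d \<theta> e t x a) *\<^sub>v (W d \<theta> s - W d \<theta> a)
              + Fe d e (X d \<theta> e t x a) *\<^sub>v (J d \<theta> s - J d \<theta> a))"
    (* networks for f_eps and g^d_eps *)
    and fe_cont: "\<And>e. 0 < e \<Longrightarrow> e < 1 \<Longrightarrow> continuous_on UNIV (fe e)"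
    and \<Phi>f_net: "\<And>e. 0 < e \<Longrightarrow> e < 1 \<Longrightarrow>
         is_net (\<Phi>f e) \<and> hd (arch (\<Phi>f e)) = 1 \<and> last (arch (\<Phi>f e)) = 1 \<and>
         (\<forall>y. realize (\<Phi>f e) (vec 1 (\<lambda>_. y)) = vec 1 (\<lambda>_. fe e y))"
    and \<Phi>g_net: "\<And>d e. 1 \<le> d \<Longrightarrow> 0 < e \<Longrightarrow> e < 1 \<Longrightarrow>
         is_net (\<Phi>g d e) \<and> hd (arch (\<Phi>g d e)) = d \<and> last (arch (\<Phi>g d e)) = 1 \<and>
         (\<forall>x. dim_vec x = d \<longrightarrow> realize (\<Phi>g d e) x = vec 1 (\<lambda>_. ge d e x))"
    (* the MLP recursion *)
    and U_rec: "\<And>d e \<theta> n m t x. 1 \<le> d \<Longrightarrow> 0 < e \<Longrightarrow> e < 1 \<Longrightarrow> \<theta> \<noteq> [] \<Longrightarrow> 1 \<le> m \<Longrightarrow>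
         t \<in> {0..T} \<Longrightarrow> dim_vec x = d \<Longrightarrow>
         U d e \<theta> (int n) (int m) t x =
           (if 1 \<le> n then 1 else 0) / real m ^ n *
             (\<Sum>i\<in>{1..m^n}. ge d e (X d (\<theta> @ [0, - int i]) e t x T))
         + (\<Sum>l<n. (T - t) / real m ^ (n - l) *
             (\<Sum>i\<in>{1..m^(n-l)}.
               (let \<eta> = \<theta> @ [int l, int i]; s = t + (T - t) * tt \<eta>; y = X d \<eta> e t x s in
                 fe e (U d e \<eta> (int l) (int m) s y)
                 - (if 1 \<le> l then 1 else 0) * fe e (U d e (\<theta> @ [- int l, int i]) (int l - 1) (int m) s y))))"
    and cc_ge: "\<And>d e. 1 \<le> d \<Longrightarrow> 0 < e \<Longrightarrow> e < 1 \<Longrightarrow>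
         cc d e \<ge> 2 * real d + real (maxnorm (arch (\<Phi>f e))) + real (maxnorm (arch (\<Phi>g d e)))
           + real (maxnorm (arch (\<Phi>\<beta> d e))) + real (maxnorm (arch (\<Phi>\<sigma> d e (0\<^sub>v d))))
           + real (maxnorm (arch (\<Phi>F d e (0\<^sub>v d))))"
  shows "\<forall>m n d e. 1 \<le> m \<longrightarrow> 1 \<le> d \<longrightarrow> 0 < e \<longrightarrow> e < 1 \<longrightarrow>
    (\<exists>\<Phi> :: real \<Rightarrow> int list \<Rightarrow> net.
       (\<forall>t\<in>{0..T}. \<forall>\<theta>. \<theta> \<noteq> [] \<longrightarrow> is_net (\<Phi> t \<theta>)) \<and>
       (\<forall>t1\<in>{0..T}. \<forall>t2\<in>{0..T}. \<forall>\<theta>1 \<theta>2. \<theta>1 \<noteq> [] \<longrightarrow> \<theta>2 \<noteq> [] \<longrightarrow>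
          arch (\<Phi> t1 \<theta>1) = arch (\<Phi> t2 \<theta>2)) \<and>
       (\<forall>t\<in>{0..T}. \<forall>\<theta>. \<theta> \<noteq> [] \<longrightarrow>
          int (length (arch (\<Phi> t \<theta>))) =
            (int n + 1) * (int K * (int (max (length (arch (\<Phi>\<beta> d e)))
                 (max (length (arch (\<Phi>\<sigma> d e (0\<^sub>v d)))) (length (arch (\<Phi>F d e (0\<^sub>v d)))))) - 1) + 1)
            + int n * (int (length (arch (\<Phi>f e))) - 2) + int (length (arch (\<Phi>g d e))) - 1) \<and>
       (\<forall>t\<in>{0..T}. \<forall>\<theta>. \<theta> \<noteq> [] \<longrightarrow> real (maxnorm (arch (\<Phi> t \<theta>))) \<le> cc d e * (3 * real m) ^ n) \<and>
       (\<forall>t\<in>{0..T}. \<forall>\<theta>. \<theta> \<noteq> [] \<longrightarrow> hd (arch (\<Phi> t \<theta>)) = d \<and>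
          (\<forall>x. dim_vec x = d \<longrightarrow> realize (\<Phi> t \<theta>) x = vec 1 (\<lambda>_. U d e \<theta> (int n) (int m) t x))))"
proof (intro allI impI, goal_cases)
  case (1 m n d e)
  then have m: "1 \<le> m" and d: "1 \<le> d" and e: "0 < e" "e < 1" by simp_all
  let ?Lb = "length (arch (\<Phi>\<beta> d e))" and ?L\<sigma> = "length (arch (\<Phi>\<sigma> d e (0\<^sub>v d)))"
    and ?LF = "length (arch (\<Phi>F d e (0\<^sub>v d)))" and ?Lf = "length (arch (\<Phi>f e))"
    and ?Lg = "length (arch (\<Phi>g d e))" and ?wb = "real (maxnorm (arch (\<Phi>\<beta> d e)))"
    and ?w\<sigma> = "real (maxnorm (arch (\<Phi>\<sigma> d e (0\<^sub>v d))))" and ?wF = "real (maxnorm (arch (\<Phi>F d e (0\<^sub>v d))))"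
    and ?wf = "real (maxnorm (arch (\<Phi>f e)))" and ?wg = "real (maxnorm (arch (\<Phi>g d e)))"
  define M where "M = max ?Lb (max ?L\<sigma> ?LF)"
  define PX where "PX = 2 * real d + max ?wb (2 * real d) + max ?w\<sigma> (2 * real d) + max ?wF (2 * real d)"
  have b: "realizable d d ?Lb ?wb (\<beta>e d e)"
    using \<Phi>\<beta>_net[OF d e] by (intro realizable_of_net) auto
  have \<sigma>: "realizable d d ?L\<sigma> ?w\<sigma> (\<lambda>x. \<sigma>e d e x *\<^sub>v v)" if "dim_vec v = d" for v
    using realizable_of_net_family[OF \<Phi>\<sigma>_net[OF d e] that] .
  have F: "realizable d d ?LF ?wF (\<lambda>x. Fe d e x *\<^sub>v v)" if "dim_vec v = d" for v
    using realizable_of_net_family[OF \<Phi>F_net[OF d e] that] .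
  have "realize (\<Phi>f e) x = vec1 (fe e (x $ 0))" if "dim_vec x = 1" for x
    using \<Phi>f_net[OF e] vec1_index_0[OF that] by metis
  then have f: "realizable 1 1 ?Lf ?wf (\<lambda>v. vec1 (fe e (v $ 0)))"
    using \<Phi>f_net[OF e] by (intro realizable_of_net) auto
  have g: "realizable d 1 ?Lg ?wg (\<lambda>x. vec1 (ge d e x))"
    using \<Phi>g_net[OF d e] by (intro realizable_of_net) auto
  have M3: "3 \<le> M" using length_arch_ge_3[of "\<Phi>\<beta> d e"] \<Phi>\<beta>_net[OF d e] by (simp add: M_def le_max_iff_disj)
  have X: "realizable d d (K * (M - 1) + 1) PX (\<lambda>x. X d \<theta> e t x s)"
    if "\<theta> \<noteq> []" "t \<in> {0..T}" "s \<in> {t..T}" for \<theta> t s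
    unfolding PX_def
  proof (rule realizable_euler_scheme[OF T_pos K_pos b \<sigma> F, where V = "W d \<theta>" and Z = "J d \<theta>"])
    show "\<sigma>e d e x \<in> carrier_mat d d \<and> Fe d e x \<in> carrier_mat d d" if "dim_vec x = d" for x
      using dims_e[OF d e that, of "0\<^sub>v d"] by simp
  qed (use M3 X_euler[OF d that(1) e that(2)] that in \<open>auto simp: M_def\<close>)
  interpret mlp: mlp_scheme T m d tt "\<lambda>\<theta> t x s. X d \<theta> e t x s" "fe e" "ge d e" "\<lambda>\<theta> k. U d e \<theta> k (int m)"
    "K * (M - 1) + 1" ?Lf ?Lg PX ?wf ?wg "cc d e"
  proof
    have "real d \<le> ?wb" "real d \<le> ?w\<sigma>" "real d \<le> ?wF" "1 \<le> ?wf" "real d \<le> ?wg"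
      using realizable_dims[OF b] realizable_dims[OF \<sigma>[of "0\<^sub>v d"]] realizable_dims[OF F[of "0\<^sub>v d"]]
        realizable_dims[OF f] realizable_dims[OF g] by auto
    then show "PX \<le> cc d e + 2 * real d" "?wf \<le> cc d e" "?wg \<le> cc d e" "4 * real d \<le> cc d e"
      using cc_ge[OF d e] by (auto simp: PX_def max_def)
  qed (use T_pos m tt_range X f g U_rec[OF d e] in auto)
  define A where "A = d # replicate (mlp.depth n - 2) (nat \<lfloor>mlp.width n\<rfloor>) @ [1]"
  obtain \<Psi> where "\<forall>t\<in>{0..T}. \<forall>\<theta>. \<theta> \<noteq> [] \<longrightarrow> is_net (\<Psi> t \<theta>) \<and> arch (\<Psi> t \<theta>) = A \<and>
      (\<forall>x. dim_vec x = d \<longrightarrow> realize (\<Psi> t \<theta>) x = vec1 (U d e \<theta> (int n) (int m) t x))"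
    using mlp.uniform_mlp_nets[of n] unfolding A_def by blast
  moreover have "hd A = d" "length A = mlp.depth n" "real (maxnorm A) \<le> mlp.width n"
    using mlp.uniform_arch_bounds[of n] unfolding A_def by auto
  moreover have "int (K * (M - 1) + 1) = int K * (int M - 1) + 1" using M3 by (simp add: of_nat_diff)
  ultimately show ?case using mlp.int_depth[of n]
    by (intro exI[of _ \<Psi>]) (auto simp: M_def mlp.width_def)
qed

end
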